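(* Let $k\ge2$, $L\ge3$, and let $T:\Pi_L\to\Sigma_k$ be the map constructed below (with $\Pi=\Pi_L$). If $y\in Trans(\Pi_L)$, then $\omega_\xi(T(y))=\omega_\xi(y)$ for each $\xi\in\{\overline d,\underline d,B^*,B_*\}$, and $\omega_\sigma(y)\subsetneq\omega_\sigma(T(y))$.
   Context: $\Sigma_k=\{0,\dots,k-1\}^{\mathbb{N}}$ with metric $d(x,y)=\sum_{n\ge1}\delta(x_n,y_n)/2^n$ ($\delta(a,b)=0$ if $a=b$, $1$ otherwise) and shift $\sigma$. $\Pi_L=\{x\in\Sigma_k:$ no $L$ consecutive symbols of $x$ are all equal$\}$; $Trans(\Pi_L)=\{y\in\Pi_L:\omega_\sigma(y)=\Pi_L\}$. A finite word is contained in $\Pi$ if it is a prefix of some point of $\Pi$. Construction of $T$: enumerate all finite words contained in $\Pi$ as $C_1,C_2,\dots$; fix a finite word $A_1$ not contained in $\Pi$; for $y\in\Pi$ let $Y_n$ be its first $n$ symbols; $B_n=C_nY_n\cdots Y_n$ ($Y_n$ repeated $|A_n|^2$ times), $A_{n+1}=A_nB_nA_n$; $T(y)$ is the point having every $A_n$ as prefix; the construction requires $|C_n|=o(|A_n|)$. $N(x,U)=\{n\ge1:\sigma^nx\in U\}$; $\overline d,\underline d$ are upper/lower asymptotic densities, $B^*,B_*$ Banach upper/lower densities; $\omega_\xi(x)=\{z:\xi(N(x,B_\varepsilon(z)))>0\ \forall\varepsilon>0\}$; $\omega_\sigma$ the $\omega$-limit set. *)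

theory Defs
  imports "HOL-Analysis.Analysis" "HOL-Library.Liminf_Limsup"
begin

text \<open>Points of Sigma_k are sequences nat => nat; the paper's symbol x_n is x (n-1).\<close>

definition Sigma :: "nat \<Rightarrow> (nat \<Rightarrow> nat) set" where
  "Sigma k = {x. \<forall>i. x i < k}"

definition sdist :: "(nat \<Rightarrow> nat) \<Rightarrow> (nat \<Rightarrow> nat) \<Rightarrow> real" where
  "sdist x y = (\<Sum>i. (if x i = y i then 0 else 1) / 2 ^ (Suc i))"

definition shift :: "(nat \<Rightarrow> nat) \<Rightarrow> (nat \<Rightarrow> nat)" where
  "shift x = (\<lambda>i. x (Suc i))"

definition sball :: "nat \<Rightarrow> (nat \<Rightarrow> nat) \<Rightarrow> real \<Rightarrow> (nat \<Rightarrow> nat) set" where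
  "sball k z e = {x \<in> Sigma k. sdist x z < e}"

definition PiL :: "nat \<Rightarrow> nat \<Rightarrow> (nat \<Rightarrow> nat) set" where
  "PiL k L = {x \<in> Sigma k. \<not> (\<exists>i. \<forall>j<L. x (i + j) = x i)}"

definition hits :: "(nat \<Rightarrow> nat) \<Rightarrow> (nat \<Rightarrow> nat) set \<Rightarrow> nat set" where
  "hits x U = {n. n \<ge> 1 \<and> (shift ^^ n) x \<in> U}"

definition omega_shift :: "nat \<Rightarrow> (nat \<Rightarrow> nat) \<Rightarrow> (nat \<Rightarrow> nat) set" where
  "omega_shift k x = {z \<in> Sigma k. \<forall>e>0. infinite (hits x (sball k z e))}"

definition Trans :: "nat \<Rightarrow> nat \<Rightarrow> (nat \<Rightarrow> nat) set" where
  "Trans k L = {y \<in> PiL k L. omega_shift k y = PiL k L}"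

definition upper_density :: "nat set \<Rightarrow> ereal" where
  "upper_density A = limsup (\<lambda>n. ereal (real (card (A \<inter> {1..n})) / real n))"

definition lower_density :: "nat set \<Rightarrow> ereal" where
  "lower_density A = liminf (\<lambda>n. ereal (real (card (A \<inter> {1..n})) / real n))"

definition banach_upper :: "nat set \<Rightarrow> ereal" where
  "banach_upper A = limsup (\<lambda>n. SUP m. ereal (real (card (A \<inter> {m+1..m+n})) / real n))"

definition banach_lower :: "nat set \<Rightarrow> ereal" where
  "banach_lower A = liminf (\<lambda>n. INF m. ereal (real (card (A \<inter> {m+1..m+n})) / real n))"

definition omega_xi :: "nat \<Rightarrow> (nat set \<Rightarrow> ereal) \<Rightarrow> (nat \<Rightarrow> nat) \<Rightarrow> (nat \<Rightarrow> nat) set" where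
  "omega_xi k xi x = {z \<in> Sigma k. \<forall>e>0. xi (hits x (sball k z e)) > 0}"

definition is_prefix :: "nat list \<Rightarrow> (nat \<Rightarrow> nat) \<Rightarrow> bool" where
  "is_prefix w x = (\<forall>i<length w. x i = w ! i)"

definition contained :: "(nat \<Rightarrow> nat) set \<Rightarrow> nat list \<Rightarrow> bool" where
  "contained P w = (\<exists>x\<in>P. is_prefix w x)"

text \<open>The words A_n: Aw A1 C y m is A_(m+1); C n is C_n (n >= 1);
  Y_n = first n symbols of y.\<close>
primrec Aw :: "nat list \<Rightarrow> (nat \<Rightarrow> nat list) \<Rightarrow> (nat \<Rightarrow> nat) \<Rightarrow> nat \<Rightarrow> nat list" where
  "Aw A1 C y 0 = A1"
| "Aw A1 C y (Suc m) =
     (let A = Aw A1 C y m; n = Suc m;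
          B = C n @ concat (replicate ((length A)^2) (map y [0..<n]))
      in A @ B @ A)"

definition Tmap :: "nat list \<Rightarrow> (nat \<Rightarrow> nat list) \<Rightarrow> (nat \<Rightarrow> nat) \<Rightarrow> (nat \<Rightarrow> nat)" where
  "Tmap A1 C y = (THE x. \<forall>m. is_prefix (Aw A1 C y m) x)"

end

theory Submission
  imports Defs
begin

lemma funpow_shift_apply: "(shift ^^ n) x i = x (n + i)"
  by (induction n arbitrary: i) (auto simp: shift_def)

lemma funpow_shift_in_Sigma: "x \<in> Sigma k \<Longrightarrow> (shift ^^ n) x \<in> Sigma k"
  by (auto simp: Sigma_def funpow_shift_apply)

lemma summable_half_powers: "summable (\<lambda>i. (1/2::real) ^ Suc i)"
  using summable_geometric[of "1/2::real"] by (simp add: summable_Suc_iff)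

lemma summable_sdist: "summable (\<lambda>i. (if x i = z i then 0 else 1) / (2::real) ^ Suc i)"
  by (rule summable_comparison_test[OF _ summable_half_powers]) (auto simp: power_one_over)

lemma sdist_ge_if_differ:
  assumes "i < M" "x i \<noteq> z i"
  shows "1 / 2 ^ M \<le> sdist x z"
proof -
  let ?f = "\<lambda>i. (if x i = z i then 0 else 1) / (2::real) ^ Suc i"
  have "(1::real) / 2 ^ M \<le> 1 / 2 ^ Suc i"
    using assms(1) by (intro divide_left_mono power_increasing) auto
  also have "\<dots> = ?f i" using assms(2) by simp
  also have "\<dots> \<le> suminf ?f"
    using sum_le_suminf[OF summable_sdist[of x z], of "{i}"] by simp
  finally show ?thesis unfolding sdist_def .
qed

lemma sdist_le_if_agree:
  assumes "\<forall>i<N. x i = z i"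
  shows "sdist x z \<le> 1 / 2 ^ N"
proof -
  let ?f = "\<lambda>i. (if x i = z i then 0 else 1) / (2::real) ^ Suc i"
  let ?g = "\<lambda>i. (if i < N then 0 else 1) / (2::real) ^ Suc i"
  have sg: "summable ?g"
    by (rule summable_comparison_test[OF _ summable_half_powers]) (auto simp: power_one_over)
  have "suminf ?f \<le> suminf ?g"
    by (rule suminf_le[OF _ summable_sdist[of x z] sg]) (use assms in auto)
  also have "\<dots> = suminf (\<lambda>i. ?g (i + N))"
    using suminf_split_initial_segment[OF sg, of N] by simp
  also have "(\<lambda>i. ?g (i + N)) = (\<lambda>i. (1 / 2 ^ Suc N) * (1/2::real) ^ i)"
    by (auto simp: power_add power_one_over field_simps)
  also have "suminf \<dots> = 1 / 2 ^ N"
    using suminf_mult[OF summable_geometric, of "1/2::real" "1 / 2 ^ Suc N"]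
      suminf_geometric[of "1/2::real"] by simp
  finally show ?thesis unfolding sdist_def .
qed

definition occurrences :: "(nat \<Rightarrow> nat) \<Rightarrow> (nat \<Rightarrow> nat) \<Rightarrow> nat \<Rightarrow> nat set" where
  "occurrences x z M = {n. n \<ge> 1 \<and> (\<forall>i<M. x (n + i) = z i)}"

lemma occurrences_antimono: "M \<le> M' \<Longrightarrow> occurrences x z M' \<subseteq> occurrences x z M"
  by (auto simp: occurrences_def)

lemma hits_sball_subset_occurrences: "hits x (sball k z (1 / 2 ^ M)) \<subseteq> occurrences x z M"
proof
  fix n assume "n \<in> hits x (sball k z (1 / 2 ^ M))"
  then have n: "n \<ge> 1" and close: "sdist ((shift ^^ n) x) z < 1 / 2 ^ M"
    by (auto simp: hits_def sball_def)
  have "x (n + i) = z i" if "i < M" for i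
    using sdist_ge_if_differ[OF that, of "(shift ^^ n) x" z] close
    by (auto simp: funpow_shift_apply)
  then show "n \<in> occurrences x z M" using n by (simp add: occurrences_def)
qed

lemma occurrences_subset_hits_sball:
  assumes "x \<in> Sigma k" "1 / 2 ^ M < e"
  shows "occurrences x z M \<subseteq> hits x (sball k z e)"
proof
  fix n assume "n \<in> occurrences x z M"
  then have "n \<ge> 1" "sdist ((shift ^^ n) x) z \<le> 1 / 2 ^ M"
    by (auto simp: occurrences_def funpow_shift_apply intro: sdist_le_if_agree)
  then show "n \<in> hits x (sball k z e)"
    using assms funpow_shift_in_Sigma[OF assms(1)] by (auto simp: hits_def sball_def)
qed

lemma hits_sball_iff_occurrences:
  assumes "x \<in> Sigma k" and P_mono: "\<And>A B. A \<subseteq> B \<Longrightarrow> P A \<Longrightarrow> P B"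
  shows "(\<forall>e>0. P (hits x (sball k z e))) \<longleftrightarrow> (\<forall>M. P (occurrences x z M))"
proof
  assume hits: "\<forall>e>0. P (hits x (sball k z e))"
  show "\<forall>M. P (occurrences x z M)"
  proof
    fix M
    have "P (hits x (sball k z (1 / 2 ^ M)))" using hits by simp
    then show "P (occurrences x z M)" by (rule P_mono[OF hits_sball_subset_occurrences])
  qed
next
  assume occ: "\<forall>M. P (occurrences x z M)"
  show "\<forall>e>0. P (hits x (sball k z e))"
  proof (intro allI impI)
    fix e :: real assume "e > 0"
    then obtain M where "(1/2::real) ^ M < e" using real_arch_pow_inv by force
    then show "P (hits x (sball k z e))"
      using P_mono[OF occurrences_subset_hits_sball[OF assms(1)] occ[rule_format, of M]]
      by (simp add: power_one_over)
  qed
qed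

lemma omega_xi_eq_occurrences:
  assumes "x \<in> Sigma k" "mono xi"
  shows "omega_xi k xi x = {z \<in> Sigma k. \<forall>M. xi (occurrences x z M) > 0}"
proof -
  have "(\<forall>e>0. xi (hits x (sball k z e)) > 0) \<longleftrightarrow> (\<forall>M. xi (occurrences x z M) > 0)" for z
    by (rule hits_sball_iff_occurrences[OF assms(1)]) (use monoD[OF assms(2)] in \<open>blast intro: less_le_trans\<close>)
  then show ?thesis unfolding omega_xi_def by blast
qed

lemma omega_shift_eq_occurrences:
  assumes "x \<in> Sigma k"
  shows "omega_shift k x = {z \<in> Sigma k. \<forall>M. infinite (occurrences x z M)}"
proof -
  have "(\<forall>e>0. infinite (hits x (sball k z e))) \<longleftrightarrow> (\<forall>M. infinite (occurrences x z M))" for z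
    by (rule hits_sball_iff_occurrences[OF assms]) (auto dest: finite_subset)
  then show ?thesis unfolding omega_shift_def by blast
qed

lemma mono_upper_density: "mono upper_density"
  unfolding mono_def upper_density_def
  by (intro allI impI Limsup_mono always_eventually ereal_less_eq(3)[THEN iffD2]
      divide_right_mono of_nat_mono card_mono) auto

lemma mono_lower_density: "mono lower_density"
  unfolding mono_def lower_density_def
  by (intro allI impI Liminf_mono always_eventually ereal_less_eq(3)[THEN iffD2]
      divide_right_mono of_nat_mono card_mono) auto

lemma mono_banach_upper: "mono banach_upper"
  unfolding mono_def banach_upper_def
  by (intro allI impI Limsup_mono always_eventually SUP_mono' ereal_less_eq(3)[THEN iffD2]
      divide_right_mono of_nat_mono card_mono) auto

lemma mono_banach_lower: "mono banach_lower"
  unfolding mono_def banach_lower_def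
  by (intro allI impI Liminf_mono always_eventually INF_mono' ereal_less_eq(3)[THEN iffD2]
      divide_right_mono of_nat_mono card_mono) auto

definition initial_density :: "nat set \<Rightarrow> nat \<Rightarrow> real" where
  "initial_density A n = real (card (A \<inter> {1..n})) / real n"

definition window_density :: "nat set \<Rightarrow> nat \<Rightarrow> nat \<Rightarrow> real" where
  "window_density A m n = real (card (A \<inter> {m+1..m+n})) / real n"

lemma ereal_pos_has_real_below: "0 < (x::ereal) \<Longrightarrow> \<exists>c>0. ereal c < x"
  using ereal_dense2 by (metis ereal_less(2) less_ereal.simps(1))

lemma ereal_not_pos_less: "c > 0 \<Longrightarrow> \<not> (x::ereal) > 0 \<Longrightarrow> x < ereal c"
  by (metis ereal_less(2) not_le order_le_less_trans)

lemma upper_density_pos_iff: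
  "upper_density A > 0 \<longleftrightarrow> (\<exists>c>0. \<forall>N. \<exists>n\<ge>N. c \<le> initial_density A n)"
proof
  assume "upper_density A > 0"
  then obtain c where c: "c > 0" "ereal c < upper_density A"
    using ereal_pos_has_real_below by blast
  have "\<forall>N. \<exists>n\<ge>N. c \<le> initial_density A n"
  proof (rule ccontr)
    assume "\<not> (\<forall>N. \<exists>n\<ge>N. c \<le> initial_density A n)"
    then obtain N where "\<forall>n\<ge>N. initial_density A n < c" by (meson not_le)
    then have "\<forall>\<^sub>F n in sequentially. ereal (initial_density A n) \<le> ereal c"
      unfolding eventually_sequentially by (auto intro: less_imp_le)
    then have "upper_density A \<le> c"
      unfolding upper_density_def initial_density_def[symmetric] by (rule Limsup_bounded)
    with c show False by simp
  qed
  with c show "\<exists>c>0. \<forall>N. \<exists>n\<ge>N. c \<le> initial_density A n" by blast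
next
  assume "\<exists>c>0. \<forall>N. \<exists>n\<ge>N. c \<le> initial_density A n"
  then obtain c where c: "c > 0" and often: "\<forall>N. \<exists>n\<ge>N. c \<le> initial_density A n" by blast
  show "upper_density A > 0"
  proof (rule ccontr)
    assume "\<not> upper_density A > 0"
    then have "upper_density A < ereal c" by (rule ereal_not_pos_less[OF c])
    then have "\<forall>\<^sub>F n in sequentially. ereal (initial_density A n) < ereal c"
      unfolding upper_density_def initial_density_def[symmetric] by (rule Limsup_lessD)
    then obtain N where "\<forall>n\<ge>N. initial_density A n < c" by (auto simp: eventually_sequentially)
    with often show False by (meson not_le)
  qed
qed

lemma lower_density_pos_iff:
  "lower_density A > 0 \<longleftrightarrow> (\<exists>c>0. \<exists>N. \<forall>n\<ge>N. c \<le> initial_density A n)"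
proof
  assume "lower_density A > 0"
  then obtain c where c: "c > 0" "ereal c < lower_density A"
    using ereal_pos_has_real_below by blast
  then have "\<forall>\<^sub>F n in sequentially. ereal c < ereal (initial_density A n)"
    unfolding lower_density_def initial_density_def[symmetric] by (intro less_LiminfD) simp
  with c show "\<exists>c>0. \<exists>N. \<forall>n\<ge>N. c \<le> initial_density A n"
    by (auto simp: eventually_sequentially intro: less_imp_le)
next
  assume "\<exists>c>0. \<exists>N. \<forall>n\<ge>N. c \<le> initial_density A n"
  then obtain c where c: "c > 0" and ev: "\<exists>N. \<forall>n\<ge>N. c \<le> initial_density A n" by blast
  have "ereal c \<le> lower_density A"
    unfolding lower_density_def initial_density_def[symmetric]
    by (rule Liminf_bounded) (use ev in \<open>auto simp: eventually_sequentially\<close>)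
  with c show "lower_density A > 0" by (metis ereal_less(2) order_less_le_trans)
qed

lemma banach_upper_pos_if_dense_windows:
  assumes "c > 0" and often: "\<forall>N. \<exists>n\<ge>N. \<exists>m. c \<le> window_density A m n"
  shows "banach_upper A > 0"
proof (rule ccontr)
  assume "\<not> banach_upper A > 0"
  then have "banach_upper A < ereal c" by (rule ereal_not_pos_less[OF assms(1)])
  then have "\<forall>\<^sub>F n in sequentially. (SUP m. ereal (window_density A m n)) < ereal c"
    unfolding banach_upper_def window_density_def[symmetric] by (rule Limsup_lessD)
  then obtain N where N: "\<forall>n\<ge>N. (SUP m. ereal (window_density A m n)) < ereal c"
    by (auto simp: eventually_sequentially)
  obtain n m where "n \<ge> N" "c \<le> window_density A m n" using often by blast
  moreover have "ereal (window_density A m n) \<le> (SUP m. ereal (window_density A m n))"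
    by (rule SUP_upper) simp
  ultimately show False using N by (metis ereal_less_eq(3) leD order_trans)
qed

lemma banach_upper_not_pos_if_sparse_windows:
  assumes "\<forall>c>0. \<exists>N. \<forall>n\<ge>N. \<forall>m. window_density A m n \<le> c"
  shows "\<not> banach_upper A > 0"
proof
  assume "banach_upper A > 0"
  then obtain c where c: "c > 0" "ereal c < banach_upper A"
    using ereal_pos_has_real_below by blast
  obtain N where N: "\<forall>n\<ge>N. \<forall>m. window_density A m n \<le> c" using assms c(1) by blast
  have "\<forall>\<^sub>F n in sequentially. (SUP m. ereal (window_density A m n)) \<le> ereal c"
    unfolding eventually_sequentially using N by (intro exI[of _ N] allI impI SUP_least) auto
  then have "banach_upper A \<le> c"
    unfolding banach_upper_def window_density_def[symmetric] by (rule Limsup_bounded)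
  with c show False by simp
qed

lemma banach_lower_not_pos_if_gaps:
  assumes "\<forall>n\<ge>1. \<exists>m. A \<inter> {m+1..m+n} = {}"
  shows "\<not> banach_lower A > 0"
proof -
  have "\<forall>\<^sub>F n in sequentially. (INF m. ereal (window_density A m n)) \<le> 0"
    unfolding eventually_sequentially
  proof (intro exI[of _ 1] allI impI)
    fix n :: nat assume "n \<ge> 1"
    then obtain m where "window_density A m n = 0"
      using assms by (auto simp: window_density_def)
    then show "(INF m. ereal (window_density A m n)) \<le> 0"
      by (metis INF_lower UNIV_I zero_ereal_def)
  qed
  then have "Limsup sequentially (\<lambda>n. INF m. ereal (window_density A m n)) \<le> 0"
    by (rule Limsup_bounded)
  moreover have "banach_lower A \<le> Limsup sequentially (\<lambda>n. INF m. ereal (window_density A m n))"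
    unfolding banach_lower_def window_density_def[symmetric] by (rule Liminf_le_Limsup) simp
  ultimately show ?thesis by simp
qed

lemma PiL_subset_Sigma: "PiL k L \<subseteq> Sigma k"
  by (auto simp: PiL_def)

lemma PiL_no_run: "x \<in> PiL k L \<Longrightarrow> \<exists>j<L. x (i + j) \<noteq> x i"
  by (auto simp: PiL_def)

lemma run_if_notin_PiL: "z \<in> Sigma k \<Longrightarrow> z \<notin> PiL k L \<Longrightarrow> \<exists>i. \<forall>j<L. z (i + j) = z i"
  by (auto simp: PiL_def)

lemma contained_nth_less:
  assumes "contained (PiL k L) w" "i < length w"
  shows "w ! i < k"
proof -
  obtain x where x: "x \<in> PiL k L" and xi: "x i = w ! i"
    using assms unfolding contained_def is_prefix_def by blast
  from x have "x i < k" by (simp add: PiL_def Sigma_def)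
  with xi show ?thesis by simp
qed

lemma prefix_contained: "x \<in> PiL k L \<Longrightarrow> contained (PiL k L) (map x [0..<K])"
  by (auto simp: contained_def is_prefix_def)

lemma alternating_in_PiL:
  assumes "k \<ge> 2" "L \<ge> 2"
  shows "(\<lambda>i. i mod 2) \<in> PiL k L"
proof -
  have "(i + 1) mod 2 \<noteq> i mod 2" for i :: nat by (simp add: mod_Suc)
  moreover have "(1::nat) < L" using assms(2) by simp
  ultimately have "\<not> (\<forall>j<L. (i + j) mod 2 = i mod 2)" for i by blast
  then show ?thesis using assms(1) by (auto simp: PiL_def Sigma_def)
qed

lemma pair_alternating_in_PiL:
  assumes "k \<ge> 2" "L \<ge> 3"
  shows "(\<lambda>i. i div 2 mod 2) \<in> PiL k L"
proof -
  have "(i + 2) div 2 mod 2 \<noteq> i div 2 mod 2" for i :: nat by (simp add: mod_Suc)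
  moreover have "(2::nat) < L" using assms(2) by simp
  ultimately have "\<not> (\<forall>j<L. (i + j) div 2 mod 2 = i div 2 mod 2)" for i by blast
  then show ?thesis using assms(1) by (auto simp: PiL_def Sigma_def)
qed

text \<open>Every word of length 4 of the sequence 0011\<dots> contains two equal adjacent symbols,
  so it never occurs in the alternating sequence 0101\<dots>.\<close>

lemma alternating_words_differ: "\<exists>i<4. (p + i) div 2 mod 2 \<noteq> ((q::nat) + i) mod 2"
proof (rule ccontr)
  assume "\<not> (\<exists>i<4. (p + i) div 2 mod 2 \<noteq> (q + i) mod 2)"
  then have eq: "(p + i) div 2 mod 2 = (q + i) mod 2" if "i < 4" for i using that by auto
  have "p div 2 = (p + 1) div 2 \<or> (p + 1) div 2 = (p + 2) div 2"
    by (cases "even p") (auto elim!: evenE oddE)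
  moreover have "q mod 2 \<noteq> (q + 1) mod 2" "(q + 1) mod 2 \<noteq> (q + 2) mod 2"
    by (simp_all add: mod_Suc)
  ultimately show False using eq[of 0] eq[of 1] eq[of 2] by auto
qed

lemma exists_PiL_avoiding_word:
  assumes "k \<ge> 2" "L \<ge> 3"
  shows "\<exists>v\<in>PiL k L. \<forall>q. \<exists>i<4. v (q + i) \<noteq> z i"
proof (cases "\<exists>q. \<forall>i<4. z i = (q + i) mod 2")
  case True
  then obtain q where q: "\<forall>i<4. z i = (q + i) mod 2" by blast
  show ?thesis
  proof (intro bexI[OF _ pair_alternating_in_PiL[OF assms]] allI)
    fix p
    obtain i where "i < 4" "(p + i) div 2 mod 2 \<noteq> (q + i) mod 2"
      using alternating_words_differ by blast
    with q show "\<exists>i<4. (p + i) div 2 mod 2 \<noteq> z i" by auto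
  qed
next
  case False
  have "(\<lambda>i. i mod 2) \<in> PiL k L" using assms by (intro alternating_in_PiL) auto
  then show ?thesis
  proof (rule bexI[rotated], intro allI)
    fix q
    from False have "\<not> (\<forall>i<4. z i = (q + i) mod 2)" by blast
    then show "\<exists>i<4. (q + i) mod 2 \<noteq> z i" by auto
  qed
qed

lemma mod_add_eq_if_less: "(i::nat) mod P + j < P \<Longrightarrow> (i + j) mod P = i mod P + j"
  by (metis mod_add_left_eq mod_less)

lemma periodic_no_run:
  fixes g :: "nat \<Rightarrow> nat"
  assumes "P > 0" "L \<ge> 2" "g (P - 1) \<noteq> g 0"
    and no_run: "\<forall>r. r + L \<le> P \<longrightarrow> (\<exists>j<L. g (r + j) \<noteq> g r)"
  shows "\<exists>j<L. g ((i + j) mod P) \<noteq> g (i mod P)"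
proof (cases "i mod P + L \<le> P")
  case True
  then obtain j where j: "j < L" "g (i mod P + j) \<noteq> g (i mod P)" using no_run by blast
  moreover have "(i + j) mod P = i mod P + j"
    using True j(1) by (intro mod_add_eq_if_less) linarith
  ultimately show ?thesis by auto
next
  case False
  text \<open>The window wraps around, so it contains the positions \<open>P - 1\<close> and \<open>0\<close> of the period.\<close>
  define j where "j = P - 1 - i mod P"
  have r: "i mod P < P" using assms(1) by simp
  have jL: "j + 1 < L" using False r unfolding j_def by linarith
  have last: "g ((i + j) mod P) = g (P - 1)"
    using r unfolding j_def by (subst mod_add_eq_if_less) auto
  have "i mod P + (j + 1) = P" using r unfolding j_def by simp
  then have "(i + (j + 1)) mod P = 0" by (metis mod_add_left_eq mod_self)
  then have first: "g ((i + (j + 1)) mod P) = g 0" by simp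
  show ?thesis
  proof (cases "g (P - 1) = g (i mod P)")
    case True
    then show ?thesis using first assms(3) jL by (intro exI[of _ "j + 1"]) auto
  next
    case False
    then show ?thesis using last jL by (intro exI[of _ j]) auto
  qed
qed

lemma periodic_in_PiL:
  fixes g :: "nat \<Rightarrow> nat"
  assumes "P > 0" "L \<ge> 2" "g (P - 1) \<noteq> g 0" "\<forall>r<P. g r < k"
    and "\<forall>r. r + L \<le> P \<longrightarrow> (\<exists>j<L. g (r + j) \<noteq> g r)"
  shows "(\<lambda>i. g (i mod P)) \<in> PiL k L"
proof -
  have "\<not> (\<forall>j<L. g ((i + j) mod P) = g (i mod P))" for i
    using periodic_no_run[OF assms(1-3,5), of i] by blast
  moreover have "g (i mod P) < k" for i using assms(1,4) by simp
  ultimately show ?thesis by (auto simp: PiL_def Sigma_def)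
qed

lemma no_run_with_separator:
  fixes z :: "nat \<Rightarrow> nat"
  assumes "L \<ge> 2" "z (M - 1) = z 0" "s \<noteq> z 0" and z_no_run: "\<forall>r. \<exists>j<L. z (r + j) \<noteq> z r"
    and r: "r + L \<le> Suc M"
  defines "g \<equiv> \<lambda>r. if r < M then z r else s"
  shows "\<exists>j<L. g (r + j) \<noteq> g r"
proof (cases "r + L \<le> M")
  case True
  obtain j where "j < L" "z (r + j) \<noteq> z r" using z_no_run by blast
  with True show ?thesis by (intro exI[of _ j]) (simp add: g_def)
next
  case False
  with r assms(1) have rL: "r + L = Suc M" "r < M" by auto
  show ?thesis
  proof (cases "z r = s")
    case True
    have "r + (L - 2) = M - 1" "L - 2 < L" using rL assms(1) by auto
    then show ?thesis using True assms(2,3) rL by (intro exI[of _ "L - 2"]) (auto simp: g_def)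
  next
    case False
    have "r + (L - 1) = M" using rL assms(1) by simp
    then show ?thesis using False rL assms(1) by (intro exI[of _ "L - 1"]) (auto simp: g_def)
  qed
qed

lemma PiL_periodic_approximation:
  assumes "k \<ge> 2" "L \<ge> 2" "z \<in> PiL k L" "M \<ge> 1"
  shows "\<exists>P u. P > 0 \<and> u \<in> PiL k L \<and> (\<forall>t i. i < M \<longrightarrow> u (t * P + i) = z i)"
proof -
  have z_less: "\<forall>r<P. z r < k" for P using assms(3) by (simp add: PiL_def Sigma_def)
  have z_no_run: "\<forall>r. \<exists>j<L. z (r + j) \<noteq> z r" using assms(3) by (auto intro: PiL_no_run)
  show ?thesis
  proof (cases "z (M - 1) = z 0")
    case False
    show ?thesis
    proof (intro exI conjI)
      show "(\<lambda>i. z (i mod M)) \<in> PiL k L"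
        using z_no_run by (intro periodic_in_PiL[OF _ assms(2) False z_less]) (use assms(4) in auto)
      show "\<forall>t i. i < M \<longrightarrow> z ((t * M + i) mod M) = z i" by simp
    qed (use assms(4) in simp)
  next
    case True
    define s :: nat where "s = (if z 0 = 0 then 1 else 0)"
    have s: "s \<noteq> z 0" "s < k" using assms(1) by (auto simp: s_def)
    define g where "g = (\<lambda>r. if r < M then z r else s)"
    have "g (Suc M - 1) \<noteq> g 0" using s(1) assms(4) by (simp add: g_def)
    moreover have "\<forall>r<Suc M. g r < k" using z_less s(2) by (simp add: g_def)
    moreover have "\<forall>r. r + L \<le> Suc M \<longrightarrow> (\<exists>j<L. g (r + j) \<noteq> g r)"
      using no_run_with_separator[OF assms(2) True s(1) z_no_run] unfolding g_def by blast
    ultimately have "(\<lambda>i. g (i mod Suc M)) \<in> PiL k L" by (intro periodic_in_PiL[OF _ assms(2)]) auto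
    moreover have "\<forall>t i. i < M \<longrightarrow> g ((t * Suc M + i) mod Suc M) = z i"
    proof (intro allI impI)
      fix t i :: nat assume "i < M"
      moreover have "(t * Suc M + i) mod Suc M = i mod Suc M" by (rule mod_mult_self3)
      ultimately show "g ((t * Suc M + i) mod Suc M) = z i" by (simp add: g_def)
    qed
    ultimately show ?thesis by (intro exI[of _ "Suc M"] exI[of _ "\<lambda>i. g (i mod Suc M)"] conjI) auto
  qed
qed

definition PiL_universal :: "nat \<Rightarrow> nat \<Rightarrow> (nat \<Rightarrow> nat) \<Rightarrow> bool" where
  "PiL_universal k L x \<longleftrightarrow> (\<forall>v\<in>PiL k L. \<forall>K. occurrences x v K \<noteq> {})"

lemma Trans_PiL_universal:
  assumes "y \<in> Trans k L"
  shows "PiL_universal k L y"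
proof -
  have "y \<in> Sigma k" using assms PiL_subset_Sigma by (auto simp: Trans_def)
  then have "infinite (occurrences y v K)" if "v \<in> PiL k L" for v K
    using assms that omega_shift_eq_occurrences[of y k] by (auto simp: Trans_def)
  then show ?thesis unfolding PiL_universal_def by (metis finite.emptyI)
qed

lemma banach_lower_occurrences_not_pos:
  assumes avoid: "\<forall>q. \<exists>i<M. v (q + i) \<noteq> z i" and occ: "\<forall>K. occurrences x v K \<noteq> {}"
  shows "\<not> banach_lower (occurrences x z M) > 0"
proof (rule banach_lower_not_pos_if_gaps, intro allI impI)
  fix n :: nat assume "n \<ge> 1"
  obtain q where q: "q \<ge> 1" "\<forall>i<n + M. x (q + i) = v i"
    using occ by (auto simp: occurrences_def)
  have "p \<notin> occurrences x z M" if p: "q \<le> p" "p < q + n" for p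
  proof
    assume "p \<in> occurrences x z M"
    then have "x (p + i) = z i" if "i < M" for i using that by (simp add: occurrences_def)
    moreover have "x (p + i) = v (p - q + i)" if "i < M" for i
      using q(2)[rule_format, of "p - q + i"] p that by simp
    ultimately have "\<forall>i<M. v (p - q + i) = z i" by simp
    then show False using avoid by blast
  qed
  moreover have "{(q - 1) + 1..(q - 1) + n} = {q..<q + n}" using q(1) \<open>n \<ge> 1\<close> by auto
  ultimately have "occurrences x z M \<inter> {(q - 1) + 1..(q - 1) + n} = {}" by auto
  then show "\<exists>m. occurrences x z M \<inter> {m + 1..m + n} = {}" by blast
qed

lemma card_occurrences_of_periodic:
  assumes "P > 0" and per: "\<forall>t i. i < M \<longrightarrow> u (t * P + i) = z i"
    and q: "q \<in> occurrences x u (N * P + M)"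
  shows "N \<le> card (occurrences x z M \<inter> {(q - 1) + 1..(q - 1) + N * P})"
proof -
  have "(\<lambda>t. q + t * P) ` {..<N} \<subseteq> occurrences x z M \<inter> {(q - 1) + 1..(q - 1) + N * P}"
  proof
    fix p assume "p \<in> (\<lambda>t. q + t * P) ` {..<N}"
    then obtain t where t: "t < N" "p = q + t * P" by blast
    have "t * P + P \<le> N * P" using mult_le_mono1[of "Suc t" N P] t(1) by simp
    then have "x (p + i) = z i" if "i < M" for i
      using q per that t(2) by (auto simp: occurrences_def add.assoc)
    then show "p \<in> occurrences x z M \<inter> {(q - 1) + 1..(q - 1) + N * P}"
      using q t \<open>t * P + P \<le> N * P\<close> assms(1) by (auto simp: occurrences_def)
  qed
  moreover have "inj_on (\<lambda>t. q + t * P) {..<N}" using assms(1) by (auto simp: inj_on_def)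
  ultimately show ?thesis by (metis card_image card_lessThan card_mono finite_Int finite_atLeastAtMost)
qed

lemma banach_upper_occurrences_pos_if_periodic:
  assumes "P > 0" and per: "\<forall>t i. i < M \<longrightarrow> u (t * P + i) = z i"
    and occ: "\<forall>K. occurrences x u K \<noteq> {}"
  shows "banach_upper (occurrences x z M) > 0"
proof (rule banach_upper_pos_if_dense_windows[of "1 / real P"])
  show "0 < 1 / real P" using assms(1) by simp
  show "\<forall>N. \<exists>n\<ge>N. \<exists>m. 1 / real P \<le> window_density (occurrences x z M) m n"
  proof
    fix N
    obtain q where q: "q \<in> occurrences x u (Suc N * P + M)" using occ by blast
    have "Suc N \<le> card (occurrences x z M \<inter> {(q - 1) + 1..(q - 1) + Suc N * P})"
      by (rule card_occurrences_of_periodic[OF assms(1) per q])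
    then have "real (Suc N) / real (Suc N * P)
        \<le> window_density (occurrences x z M) (q - 1) (Suc N * P)"
      unfolding window_density_def by (intro divide_right_mono) auto
    moreover have "real (Suc N) / real (Suc N * P) = 1 / real P"
      by (simp only: of_nat_mult) simp
    moreover have "N \<le> Suc N * P" using assms(1) mult_le_mono2[of 1 P "Suc N"] by simp
    ultimately show "\<exists>n\<ge>N. \<exists>m. 1 / real P \<le> window_density (occurrences x z M) m n"
      by (metis (no_types))
  qed
qed

lemma PiL_universal_banach_upper_pos:
  assumes "k \<ge> 2" "L \<ge> 2" "PiL_universal k L x" "z \<in> PiL k L"
  shows "banach_upper (occurrences x z M) > 0"
proof -
  obtain P u where Pu: "P > 0" "u \<in> PiL k L" "\<forall>t i. i < max M 1 \<longrightarrow> u (t * P + i) = z i"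
    using PiL_periodic_approximation[OF assms(1,2,4), of "max M 1"] by auto
  have "\<forall>K. occurrences x u K \<noteq> {}" using assms(3) Pu(2) by (simp add: PiL_universal_def)
  then have "banach_upper (occurrences x z (max M 1)) > 0"
    by (rule banach_upper_occurrences_pos_if_periodic[OF Pu(1,3)])
  also have "banach_upper (occurrences x z (max M 1)) \<le> banach_upper (occurrences x z M)"
    by (rule monoD[OF mono_banach_upper occurrences_antimono[OF max.cobounded1]])
  finally show ?thesis .
qed

lemma omega_banach_lower_empty:
  assumes "x \<in> Sigma k" "k \<ge> 2" "L \<ge> 3" "PiL_universal k L x"
  shows "omega_xi k banach_lower x = {}"
proof -
  have "\<not> banach_lower (occurrences x z 4) > 0" for z
  proof -
    obtain v where "v \<in> PiL k L" "\<forall>q. \<exists>i<4. v (q + i) \<noteq> z i"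
      using exists_PiL_avoiding_word[OF assms(2,3)] by blast
    then show ?thesis
      using assms(4) by (intro banach_lower_occurrences_not_pos) (auto simp: PiL_universal_def)
  qed
  then show ?thesis by (auto simp: omega_xi_eq_occurrences[OF assms(1) mono_banach_lower])
qed

lemma omega_banach_upper_eq_PiL:
  assumes "x \<in> Sigma k" "k \<ge> 2" "L \<ge> 2" "PiL_universal k L x"
    and not_PiL: "\<And>z. z \<in> Sigma k \<Longrightarrow> z \<notin> PiL k L \<Longrightarrow> \<exists>M. \<not> banach_upper (occurrences x z M) > 0"
  shows "omega_xi k banach_upper x = PiL k L"
  using PiL_universal_banach_upper_pos[OF assms(2-4)] not_PiL PiL_subset_Sigma
  by (fastforce simp: omega_xi_eq_occurrences[OF assms(1) mono_banach_upper])

lemma banach_upper_occurrences_PiL_not_pos: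
  assumes "x \<in> PiL k L" "z \<in> Sigma k" "z \<notin> PiL k L" "L \<ge> 1"
  shows "\<exists>M. \<not> banach_upper (occurrences x z M) > 0"
proof -
  obtain i where i: "\<forall>j<L. z (i + j) = z i" using run_if_notin_PiL[OF assms(2,3)] by blast
  have "occurrences x z (i + L) = {}"
  proof (rule ccontr)
    assume "occurrences x z (i + L) \<noteq> {}"
    then obtain q where q: "\<forall>j<i + L. x (q + j) = z j" by (auto simp: occurrences_def)
    have "x (q + i + j) = x (q + i)" if "j < L" for j
      using q[rule_format, of "i + j"] q[rule_format, of i] i that assms(4)
      by (simp add: add.assoc)
    then show False using PiL_no_run[OF assms(1), of "q + i"] by auto
  qed
  then have "\<not> banach_upper (occurrences x z (i + L)) > 0"
    by (intro banach_upper_not_pos_if_sparse_windows) (auto simp: window_density_def)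
  then show ?thesis by blast
qed

lemma card_residues_in_window:
  fixes n :: nat
  assumes "n > 0" "R \<subseteq> {..<n}"
  shows "card {q \<in> {u..<u+len}. s \<le> q \<and> (q - s) mod n \<in> R} \<le> (len div n + 1) * card R"
proof -
  let ?W = "\<lambda>v l. {q \<in> {v..<v+l}. s \<le> q \<and> (q - s) mod n \<in> R}"
  have "finite R" using assms(2) finite_subset by blast
  have period: "card (?W v n) \<le> card R" for v
  proof -
    have "inj_on (\<lambda>q. (q - s) mod n) (?W v n)"
    proof (rule linorder_inj_onI')
      fix p q assume "p \<in> ?W v n" "q \<in> ?W v n" "p < q"
      then have "0 < (q - s) - (p - s)" "(q - s) - (p - s) < n" by auto
      then show "(p - s) mod n \<noteq> (q - s) mod n"
        by (metis mod_eq_dvd_iff_nat nat_dvd_not_less diff_le_mono less_or_eq_imp_le zero_less_diff)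
    qed
    then have "card (?W v n) = card ((\<lambda>q. (q - s) mod n) ` ?W v n)" by (rule card_image[symmetric])
    also have "\<dots> \<le> card R" using \<open>finite R\<close> by (intro card_mono) auto
    finally show ?thesis .
  qed
  have periods: "card (?W u (K * n)) \<le> K * card R" for K
  proof (induction K)
    case (Suc K)
    have "card (?W u (Suc K * n)) \<le> card (?W u (K * n) \<union> ?W (u + K * n) n)"
      by (rule card_mono) auto
    also have "\<dots> \<le> card (?W u (K * n)) + card (?W (u + K * n) n)" by (rule card_Un_le)
    finally show ?case using Suc.IH period[of "u + K * n"] by simp
  qed simp
  have "len div n * n + len mod n = len" by (rule div_mult_mod_eq)
  moreover have "len mod n < n" using assms(1) by simp
  ultimately have "len < (len div n + 1) * n" unfolding add_mult_distrib by linarith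
  then have "card (?W u len) \<le> card (?W u ((len div n + 1) * n))" by (intro card_mono) auto
  with periods[of "len div n + 1"] show ?thesis by linarith
qed

lemma card_image_add_window:
  fixes D u v :: nat
  shows "card ((\<lambda>x. x + D) ` X \<inter> {u..<v}) \<le> card (X \<inter> {u - D..<v - D})"
proof -
  have "(\<lambda>x. x + D) ` X \<inter> {u..<v} \<subseteq> (\<lambda>x. x + D) ` (X \<inter> {u - D..<v - D})" by force
  then have "card ((\<lambda>x. x + D) ` X \<inter> {u..<v}) \<le> card ((\<lambda>x. x + D) ` (X \<inter> {u - D..<v - D}))"
    by (intro card_mono) auto
  also have "\<dots> \<le> card (X \<inter> {u - D..<v - D})" by (rule card_image_le) simp
  finally show ?thesis .
qed

lemma length_concat_replicate: "length (concat (replicate r w)) = r * length w"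
  by (induction r) auto

lemma nth_concat_replicate:
  assumes "t < r" "i < length w"
  shows "concat (replicate r w) ! (t * length w + i) = w ! i"
  using assms
proof (induction r arbitrary: t)
  case (Suc r)
  then show ?case by (cases t) (auto simp: nth_append length_concat_replicate)
qed simp

lemma PiL_imp_Sigma: "x \<in> PiL k L \<Longrightarrow> x \<in> Sigma k"
  by (simp add: PiL_def)

locale T_construction =
  fixes k L :: nat and A1 :: "nat list" and C :: "nat \<Rightarrow> nat list" and y :: "nat \<Rightarrow> nat"
  assumes k_ge_2: "k \<ge> 2" and L_ge_3: "L \<ge> 3"
    and C_enumeration: "bij_betw C {1..} {w. contained (PiL k L) w}"
    and A1_symbols: "set A1 \<subseteq> {..<k}" and A1_not_contained: "\<not> contained (PiL k L) A1"
    and C_negligible: "(\<lambda>m. real (length (C (Suc m))) / real (length (Aw A1 C y m))) \<longlonglongrightarrow> 0"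
    and y_Trans: "y \<in> Trans k L"
begin

abbreviation A :: "nat \<Rightarrow> nat list" where "A \<equiv> Aw A1 C y"

text \<open>In \<open>A (Suc m) = A m @ C (Suc m) @ Y\<dots>Y @ A m\<close>, where \<open>Y\<close>
  consists of the first \<open>m + 1\<close> symbols of \<open>y\<close> and is repeated \<open>(a m)\<^sup>2\<close> times, the block of
  \<open>Y\<close>'s starts at \<open>ystart m\<close> and the second copy of \<open>A m\<close> at \<open>copy_start m\<close>.\<close>

definition a :: "nat \<Rightarrow> nat" where "a m = length (A m)"
definition lenC :: "nat \<Rightarrow> nat" where "lenC m = length (C (Suc m))"
definition ystart :: "nat \<Rightarrow> nat" where "ystart m = a m + lenC m"
definition copy_start :: "nat \<Rightarrow> nat" where "copy_start m = ystart m + Suc m * (a m)\<^sup>2"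
definition T :: "nat \<Rightarrow> nat" where "T = Tmap A1 C y"

lemma A_Suc: "A (Suc m) = A m @ C (Suc m) @ concat (replicate ((a m)\<^sup>2) (map y [0..<Suc m])) @ A m"
  by (simp add: Let_def a_def)

declare Aw.simps(2)[simp del]

lemma a_Suc: "a (Suc m) = copy_start m + a m"
  by (simp add: a_def A_Suc length_concat_replicate copy_start_def ystart_def lenC_def
      del: upt_Suc)

lemma y_in_PiL: "y \<in> PiL k L"
  using y_Trans by (simp add: Trans_def)

lemma y_in_Sigma: "y \<in> Sigma k"
  using y_in_PiL PiL_subset_Sigma by blast

lemma A1_nonempty: "A1 \<noteq> []"
proof
  assume "A1 = []"
  moreover have "(\<lambda>i. i mod 2) \<in> PiL k L" using k_ge_2 L_ge_3 by (intro alternating_in_PiL) auto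
  ultimately show False using A1_not_contained by (auto simp: contained_def is_prefix_def)
qed

lemma a_pos: "a m > 0"
proof (induction m)
  case 0
  then show ?case using A1_nonempty by (simp add: a_def)
qed (simp add: a_Suc)

lemma a_less_a_Suc: "a m < a (Suc m)"
  using a_pos[of m] by (simp add: a_Suc copy_start_def ystart_def)

lemma strict_mono_a: "strict_mono a"
  using a_less_a_Suc by (simp add: strict_mono_Suc_iff)

lemma a_mono: "m \<le> m' \<Longrightarrow> a m \<le> a m'"
  using strict_mono_a strict_mono_less_eq by blast

lemma a_add_le: "a n + t \<le> a (n + t)"
proof (induction t)
  case (Suc t)
  then show ?case using a_less_a_Suc[of "n + t"] by simp
qed simp

lemma Suc_le_a: "Suc m \<le> a m"
  using a_add_le[of 0 m] a_pos[of 0] by simp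

lemma ystart_le_copy_start: "ystart m \<le> copy_start m"
  by (simp add: copy_start_def)

lemma a_le_ystart: "a m \<le> ystart m"
  by (simp add: ystart_def)

lemma Y_block_le_a_Suc: "Suc m * (a m)\<^sup>2 \<le> a (Suc m)"
  by (simp add: a_Suc copy_start_def)

lemma A_nth_Suc: "i < a m \<Longrightarrow> A (Suc m) ! i = A m ! i"
  by (simp add: A_Suc nth_append a_def)

lemma A_nth_mono: "m \<le> m' \<Longrightarrow> i < a m \<Longrightarrow> A m' ! i = A m ! i"
proof (induction m' rule: dec_induct)
  case (step n)
  then show ?case using A_nth_Suc[of i n] a_mono[of m n] by simp
qed simp

lemma A_nth_diag: "i < a m \<Longrightarrow> A i ! i = A m ! i"
  using A_nth_mono[of i m i] A_nth_mono[of m i i] Suc_le_a[of i] by (cases "i \<le> m") auto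

lemma T_eq: "T = (\<lambda>i. A i ! i)"
proof -
  have "is_prefix (A m) (\<lambda>i. A i ! i)" for m
    using A_nth_diag by (simp add: is_prefix_def a_def)
  moreover have "x = (\<lambda>i. A i ! i)" if "\<forall>m. is_prefix (A m) x" for x
  proof
    fix i
    have "i < length (A i)" using Suc_le_a[of i] by (simp add: a_def)
    then show "x i = A i ! i" using that by (simp add: is_prefix_def)
  qed
  ultimately show ?thesis unfolding T_def Tmap_def by (intro the_equality) auto
qed

lemma T_nth: "i < a m \<Longrightarrow> T i = A m ! i"
  by (simp add: T_eq A_nth_diag)

lemma T_in_C: "j < lenC m \<Longrightarrow> T (a m + j) = C (Suc m) ! j"
proof -
  assume j: "j < lenC m"
  then have "a m + j < a (Suc m)" by (simp add: a_Suc copy_start_def ystart_def)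
  then have "T (a m + j) = A (Suc m) ! (a m + j)" by (rule T_nth)
  also have "\<dots> = C (Suc m) ! j" using j by (simp add: A_Suc nth_append a_def lenC_def)
  finally show ?thesis .
qed

lemma T_in_Y: "t < (a m)\<^sup>2 \<Longrightarrow> r < Suc m \<Longrightarrow> T (ystart m + t * Suc m + r) = y r"
proof -
  assume t: "t < (a m)\<^sup>2" and r: "r < Suc m"
  have "t * Suc m + r < Suc t * Suc m" using r by simp
  also have "\<dots> \<le> (a m)\<^sup>2 * Suc m" using t by (intro mult_right_mono) auto
  finally have le': "t * Suc m + r < (a m)\<^sup>2 * Suc m" .
  then have le: "t * Suc m + r < Suc m * (a m)\<^sup>2" by (simp add: mult.commute)
  then have "ystart m + t * Suc m + r < a (Suc m)" by (simp add: a_Suc copy_start_def)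
  then have "T (ystart m + t * Suc m + r) = A (Suc m) ! (ystart m + t * Suc m + r)" by (rule T_nth)
  also have "\<dots> = concat (replicate ((a m)\<^sup>2) (map y [0..<Suc m])) ! (t * Suc m + r)"
    using le' unfolding A_Suc ystart_def a_def lenC_def
    by (simp add: nth_append length_concat_replicate add.assoc
        del: mult_Suc_right mult_Suc upt_Suc)
  also have "\<dots> = y r"
    using nth_concat_replicate[of t "(a m)\<^sup>2" r "map y [0..<Suc m]"] t r by (simp del: upt_Suc)
  finally show ?thesis .
qed

lemma T_in_copy: "i < a m \<Longrightarrow> T (copy_start m + i) = T i"
proof -
  assume i: "i < a m"
  then have "T (copy_start m + i) = A (Suc m) ! (copy_start m + i)" by (intro T_nth) (simp add: a_Suc)
  also have "\<dots> = A m ! i"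
    using i by (simp add: A_Suc nth_append a_def[symmetric] lenC_def[symmetric] copy_start_def
        ystart_def length_concat_replicate del: upt_Suc)
  also have "\<dots> = T i" using T_nth[OF i] by simp
  finally show ?thesis .
qed

lemma T_suffix: "i \<le> m \<Longrightarrow> p < a i \<Longrightarrow> T (a m - a i + p) = T p"
proof (induction m rule: dec_induct)
  case (step n)
  have "a n - a i + p < a n" using step a_mono[of i n] by linarith
  then have "T (copy_start n + (a n - a i + p)) = T (a n - a i + p)" by (rule T_in_copy)
  moreover have "a (Suc n) - a i + p = copy_start n + (a n - a i + p)"
    using a_Suc[of n] a_mono[of i n] step by simp
  ultimately have "T (a (Suc n) - a i + p) = T (a n - a i + p)" by (simp only:)
  with step.IH step.prems show ?case by simp
qed simp

lemma C_contained: "n \<ge> 1 \<Longrightarrow> contained (PiL k L) (C n)"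
  using C_enumeration unfolding bij_betw_def by auto

lemma C_surj: "contained (PiL k L) w \<Longrightarrow> \<exists>n. C (Suc n) = w"
  using C_enumeration unfolding bij_betw_def
  by (metis (no_types, lifting) Suc_pred atLeast_iff imageE mem_Collect_eq not_one_le_zero
      zero_less_iff_neq_zero)

lemma set_A_subset: "set (A m) \<subseteq> {..<k}"
proof (induction m)
  case 0
  then show ?case using A1_symbols by simp
next
  case (Suc m)
  have "set (concat (replicate r w)) \<subseteq> set w" for r and w :: "nat list"
    by (induction r) auto
  moreover have "set (map y [0..<Suc m]) \<subseteq> {..<k}" using y_in_Sigma by (auto simp: Sigma_def)
  ultimately have "set (concat (replicate r (map y [0..<Suc m]))) \<subseteq> {..<k}" for r
    by (meson order_trans)
  moreover have "set (C (Suc m)) \<subseteq> {..<k}"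
    using contained_nth_less[OF C_contained[of "Suc m"]] by (auto simp: in_set_conv_nth)
  ultimately show ?case using Suc.IH unfolding A_Suc set_append by blast
qed

lemma T_in_Sigma: "T \<in> Sigma k"
proof -
  have "T i < k" for i
    using T_nth[of i i] Suc_le_a[of i] set_A_subset[of i] nth_mem[of i "A i"]
    by (force simp: a_def)
  then show ?thesis by (simp add: Sigma_def)
qed

lemma T_notin_PiL: "T \<notin> PiL k L"
proof
  assume "T \<in> PiL k L"
  moreover have "is_prefix A1 T" using T_nth[of _ 0] by (simp add: is_prefix_def a_def)
  ultimately show False using A1_not_contained by (auto simp: contained_def)
qed

lemma T_contains_contained_word:
  assumes "contained (PiL k L) w"
  shows "\<exists>q\<ge>N. q \<in> occurrences T (\<lambda>j. w ! j) (length w)"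
proof -
  obtain n where n: "C (Suc n) = w" using C_surj[OF assms] by blast
  define q where "q = a (N + Suc n) - a (Suc n) + a n"
  have "T (q + j) = w ! j" if "j < length w" for j
  proof -
    have "a n + j < a (Suc n)" using that n by (simp add: a_Suc copy_start_def ystart_def lenC_def)
    then have "T (q + j) = T (a n + j)"
      unfolding q_def using T_suffix[of "Suc n" "N + Suc n" "a n + j"] by (simp add: add.assoc)
    also have "\<dots> = w ! j" using that n by (simp add: T_in_C lenC_def)
    finally show ?thesis .
  qed
  moreover have "N \<le> q" "1 \<le> q"
    using a_add_le[of "Suc n" N] a_pos[of n] by (auto simp: q_def add.commute)
  ultimately show ?thesis by (auto simp: occurrences_def)
qed

lemma infinite_occurrences_T_of_PiL:
  assumes "v \<in> PiL k L"
  shows "infinite (occurrences T v K)"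
proof -
  have "\<exists>q\<ge>N. q \<in> occurrences T v K" for N
    using T_contains_contained_word[OF prefix_contained[OF assms, of K], of N]
    by (simp add: occurrences_def)
  then show ?thesis by (simp add: infinite_nat_iff_unbounded_le)
qed

lemma T_PiL_universal: "PiL_universal k L T"
  unfolding PiL_universal_def using infinite_occurrences_T_of_PiL by (metis finite.emptyI)

lemma infinite_occurrences_T_T: "infinite (occurrences T T K)"
proof -
  have "a (K + Suc N) - a K \<in> occurrences T T K" for N
  proof -
    have "T (a (K + Suc N) - a K + i) = T i" if "i < K" for i
      using T_suffix[of K "K + Suc N" i] that Suc_le_a[of K] by simp
    moreover have "Suc N \<le> a (K + Suc N) - a K" using a_add_le[of K "Suc N"] by simp
    ultimately show ?thesis by (simp add: occurrences_def)
  qed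
  moreover have "N \<le> a (K + Suc N) - a K" for N using a_add_le[of K "Suc N"] by simp
  ultimately show ?thesis unfolding infinite_nat_iff_unbounded_le by blast
qed

lemma omega_shift_y_psubset_T: "omega_shift k y \<subset> omega_shift k T"
proof -
  have "PiL k L \<subseteq> omega_shift k T"
    using infinite_occurrences_T_of_PiL PiL_imp_Sigma
    by (auto simp: omega_shift_eq_occurrences[OF T_in_Sigma])
  moreover have "T \<in> omega_shift k T"
    using infinite_occurrences_T_T T_in_Sigma by (simp add: omega_shift_eq_occurrences[OF T_in_Sigma])
  ultimately show ?thesis using T_notin_PiL y_Trans by (auto simp: Trans_def)
qed

end

definition count_upto :: "nat set \<Rightarrow> nat \<Rightarrow> nat" where
  "count_upto S n = card (S \<inter> {1..n})"

lemma initial_density_eq_count_upto: "initial_density S n = real (count_upto S n) / real n"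
  by (simp add: initial_density_def count_upto_def)

lemma count_upto_add: "count_upto S (b + n) = count_upto S b + card (S \<inter> {b+1..b+n})"
proof -
  have "S \<inter> {1..b+n} = (S \<inter> {1..b}) \<union> (S \<inter> {b+1..b+n})" by auto
  moreover have "(S \<inter> {1..b}) \<inter> (S \<inter> {b+1..b+n}) = {}" by auto
  ultimately show ?thesis unfolding count_upto_def by (simp add: card_Un_disjoint)
qed

lemma count_upto_mono: "t \<le> t' \<Longrightarrow> count_upto S t \<le> count_upto S t'"
  unfolding count_upto_def by (intro card_mono) auto

lemma count_upto_le_add_diff: "t \<le> t' \<Longrightarrow> count_upto S t' \<le> count_upto S t + (t' - t)"
  using count_upto_add[of S t "t' - t"] card_mono[of "{t+1..t'}" "S \<inter> {t+1..t'}"] by simp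

context T_construction
begin

lemma lenC_le_eps: "\<epsilon> > 0 \<Longrightarrow> \<exists>m0. \<forall>m\<ge>m0. real (lenC m) \<le> \<epsilon> * real (a m)"
proof -
  assume "\<epsilon> > 0"
  with C_negligible have "\<forall>\<^sub>F m in sequentially. dist (real (lenC m) / real (a m)) 0 < \<epsilon>"
    unfolding lenC_def a_def by (rule tendstoD)
  then obtain m0 where "\<forall>m\<ge>m0. real (lenC m) / real (a m) < \<epsilon>"
    by (auto simp: eventually_sequentially)
  moreover have "real (a m) > 0" for m using a_pos[of m] by simp
  ultimately show ?thesis by (metis less_imp_le pos_divide_less_eq)
qed

lemma lenC_le_a_eventually: "\<exists>m0. \<forall>m\<ge>m0. lenC m \<le> a m"
  using lenC_le_eps[of 1] by auto

lemma a_Suc_le: "lenC m \<le> a m \<Longrightarrow> a (Suc m) \<le> 4 * Suc m * (a m)\<^sup>2"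
proof -
  assume "lenC m \<le> a m"
  moreover have "a m \<le> (a m)\<^sup>2" by (simp add: power2_eq_square)
  moreover have "(a m)\<^sup>2 \<le> Suc m * (a m)\<^sup>2" by simp
  ultimately show ?thesis by (simp add: a_Suc copy_start_def ystart_def algebra_simps)
qed

lemma sq_le_a: "m * m \<le> a m"
proof (induction m)
  case (Suc m)
  have "Suc m * Suc m \<le> a m * a m" using mult_le_mono[OF Suc_le_a Suc_le_a] .
  also have "\<dots> \<le> Suc m * (a m)\<^sup>2" by (simp add: power2_eq_square)
  also have "\<dots> \<le> a (Suc m)" by (rule Y_block_le_a_Suc)
  finally show ?case .
qed simp

lemma level_exists:
  assumes "a m1 \<le> t"
  shows "\<exists>m\<ge>m1. a m \<le> t \<and> t < a (Suc m)"
proof -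
  have ex: "\<exists>j. t < a j" using Suc_le_a[of t] by (intro exI[of _ t]) simp
  define j where "j = (LEAST j. t < a j)"
  have j: "t < a j" unfolding j_def by (rule LeastI_ex[OF ex])
  have j_least: "i < j \<Longrightarrow> a i \<le> t" for i
    using not_less_Least[of i "\<lambda>j. t < a j"] unfolding j_def by (simp add: not_less)
  have "m1 < j"
  proof (rule ccontr)
    assume "\<not> m1 < j"
    then have "a j \<le> a m1" by (intro a_mono) simp
    with j assms show False by simp
  qed
  then obtain m where "j = Suc m" "m1 \<le> m" by (cases j) auto
  then show ?thesis using j j_least[of m] by (intro exI[of _ m]) auto
qed

end

locale T_occurrences = T_construction +
  fixes z :: "nat \<Rightarrow> nat" and M :: nat
begin

abbreviation occ_T :: "nat set" where "occ_T \<equiv> occurrences T z M"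
abbreviation occ_y :: "nat set" where "occ_y \<equiv> occurrences y z M"
abbreviation cnt_T :: "nat \<Rightarrow> nat" where "cnt_T \<equiv> count_upto occ_T"
abbreviation cnt_y :: "nat \<Rightarrow> nat" where "cnt_y \<equiv> count_upto occ_y"

lemma occ_T_in_Y_iff:
  assumes "t < (a m)\<^sup>2" "1 \<le> r" "r + M \<le> Suc m"
  shows "ystart m + t * Suc m + r \<in> occ_T \<longleftrightarrow> r \<in> occ_y"
proof -
  have "T (ystart m + t * Suc m + r + i) = y (r + i)" if "i < M" for i
    using T_in_Y[OF assms(1), of "r + i"] that assms(3) by (simp add: add.assoc)
  then show ?thesis using assms(2) by (auto simp: occurrences_def)
qed

lemma card_occ_T_Y_period_le:
  assumes "t < (a m)\<^sup>2"
  defines "b \<equiv> ystart m + t * Suc m"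
  shows "card (occ_T \<inter> {b+1..b+Suc m}) \<le> cnt_y (Suc m) + M"
proof -
  let ?S = "(occ_y \<inter> {1..Suc m}) \<union> {Suc m - M<..Suc m}"
  have "occ_T \<inter> {b+1..b+Suc m} \<subseteq> (\<lambda>r. b + r) ` ?S"
  proof
    fix q assume q: "q \<in> occ_T \<inter> {b+1..b+Suc m}"
    then have qb: "q = b + (q - b)" "1 \<le> q - b" "q - b \<le> Suc m" by auto
    have "q - b \<in> ?S"
    proof (cases "q - b + M \<le> Suc m")
      case True
      then have "q - b \<in> occ_y"
        using occ_T_in_Y_iff[OF assms(1) qb(2) True] q qb(1) unfolding b_def by simp
      then show ?thesis using qb by simp
    qed (use qb in auto)
    with qb(1) show "q \<in> (\<lambda>r. b + r) ` ?S" by (rule image_eqI)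
  qed
  then have "card (occ_T \<inter> {b+1..b+Suc m}) \<le> card ((\<lambda>r. b + r) ` ?S)"
    by (rule card_mono[rotated]) simp
  also have "\<dots> \<le> card ?S" by (rule card_image_le) simp
  also have "\<dots> \<le> cnt_y (Suc m) + M"
    using card_Un_le[of "occ_y \<inter> {1..Suc m}" "{Suc m - M<..Suc m}"] by (simp add: count_upto_def)
  finally show ?thesis .
qed

lemma card_occ_T_Y_period_ge:
  assumes "t < (a m)\<^sup>2"
  defines "b \<equiv> ystart m + t * Suc m"
  shows "cnt_y (Suc m) - M \<le> card (occ_T \<inter> {b+1..b+Suc m})"
proof -
  have "(\<lambda>r. b + r) ` (occ_y \<inter> {1..Suc m - M}) \<subseteq> occ_T \<inter> {b+1..b+Suc m}"
    using occ_T_in_Y_iff[OF assms(1)] unfolding b_def by auto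
  then have "card ((\<lambda>r. b + r) ` (occ_y \<inter> {1..Suc m - M})) \<le> card (occ_T \<inter> {b+1..b+Suc m})"
    by (rule card_mono[rotated]) simp
  moreover have "card ((\<lambda>r. b + r) ` (occ_y \<inter> {1..Suc m - M})) = cnt_y (Suc m - M)"
    unfolding count_upto_def by (rule card_image) (simp add: inj_on_def)
  ultimately have "cnt_y (Suc m - M) \<le> card (occ_T \<inter> {b+1..b+Suc m})" by simp
  moreover have "cnt_y (Suc m) \<le> cnt_y (Suc m - M) + M"
    using count_upto_le_add_diff[of "Suc m - M" "Suc m" occ_y] by simp
  ultimately show ?thesis by linarith
qed

lemma cnt_T_Y_periods_le:
  "p \<le> (a m)\<^sup>2 \<Longrightarrow> cnt_T (ystart m + p * Suc m) \<le> cnt_T (ystart m) + p * (cnt_y (Suc m) + M)"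
proof (induction p)
  case (Suc p)
  have "cnt_T (ystart m + Suc p * Suc m)
      = cnt_T (ystart m + p * Suc m) + card (occ_T \<inter> {ystart m + p * Suc m + 1..ystart m + p * Suc m + Suc m})"
    using count_upto_add[of occ_T "ystart m + p * Suc m" "Suc m"] by (simp add: algebra_simps)
  also have "\<dots> \<le> cnt_T (ystart m + p * Suc m) + (cnt_y (Suc m) + M)"
    using card_occ_T_Y_period_le[of p m] Suc.prems by simp
  finally show ?case using Suc by simp
qed simp

lemma cnt_T_Y_periods_ge:
  "p \<le> (a m)\<^sup>2 \<Longrightarrow> cnt_T (ystart m) + p * (cnt_y (Suc m) - M) \<le> cnt_T (ystart m + p * Suc m)"
proof (induction p)
  case (Suc p)
  have "cnt_T (ystart m + p * Suc m) + (cnt_y (Suc m) - M)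
      \<le> cnt_T (ystart m + p * Suc m) + card (occ_T \<inter> {ystart m + p * Suc m + 1..ystart m + p * Suc m + Suc m})"
    using card_occ_T_Y_period_ge[of p m] Suc.prems by simp
  also have "\<dots> = cnt_T (ystart m + Suc p * Suc m)"
    using count_upto_add[of occ_T "ystart m + p * Suc m" "Suc m"] by (simp add: algebra_simps)
  finally show ?case using Suc by simp
qed simp

lemma cnt_T_copy_start_ge: "(a m)\<^sup>2 * (cnt_y (Suc m) - M) \<le> cnt_T (copy_start m)"
  using cnt_T_Y_periods_ge[of "(a m)\<^sup>2" m] by (simp add: copy_start_def mult.commute)

lemma cnt_T_a_Suc_le:
  assumes "lenC m \<le> a m"
  shows "cnt_T (a (Suc m)) \<le> (a m)\<^sup>2 * (cnt_y (Suc m) + M + 3)"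
proof -
  have "cnt_T (a (Suc m)) \<le> cnt_T (copy_start m) + a m"
    using count_upto_le_add_diff[of "copy_start m" "a (Suc m)" occ_T] by (simp add: a_Suc)
  moreover have "cnt_T (copy_start m) \<le> cnt_T (ystart m) + (a m)\<^sup>2 * (cnt_y (Suc m) + M)"
    using cnt_T_Y_periods_le[of "(a m)\<^sup>2" m] by (simp add: copy_start_def mult.commute)
  moreover have "cnt_T (ystart m) \<le> ystart m"
    using count_upto_le_add_diff[of 0 "ystart m" occ_T] by (simp add: count_upto_def)
  moreover have "ystart m + a m \<le> 3 * (a m)\<^sup>2"
  proof -
    have "a m \<le> (a m)\<^sup>2" by (simp add: power2_eq_square)
    with assms show ?thesis by (simp add: ystart_def)
  qed
  ultimately show ?thesis by (simp add: algebra_simps)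
qed

end

lemma real_diff_le_of_nat_diff: "real a - real b \<le> real (a - b)"
  by (cases "b \<le> a") (auto simp: of_nat_diff)

lemma exists_nat_gt_div: "c > 0 \<Longrightarrow> \<exists>K::nat. \<forall>n\<ge>K. x < c * real n"
proof -
  assume "c > 0"
  obtain K :: nat where "x / c < K" using reals_Archimedean2 by blast
  then have "x / c < real n" if "n \<ge> K" for n using that of_nat_mono[OF that] by linarith
  then have "x < c * real n" if "n \<ge> K" for n
    using \<open>c > 0\<close> that by (simp add: pos_divide_less_eq mult.commute)
  then show ?thesis by blast
qed

context T_construction
begin

lemma copy_start_le_a_Suc: "copy_start m \<le> a (Suc m)"
  by (simp add: a_Suc)

lemma Y_block_le_copy_start: "Suc m * (a m)\<^sup>2 \<le> copy_start m"
  by (simp add: copy_start_def)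

lemma one_le_a_sq: "1 \<le> (a m)\<^sup>2"
  using a_pos[of m] by (simp add: Suc_le_eq)

lemma Y_period_index_le: "t \<le> copy_start m \<Longrightarrow> (t - ystart m) div Suc m \<le> (a m)\<^sup>2"
proof -
  assume "t \<le> copy_start m"
  then have "(t - ystart m) div Suc m \<le> (Suc m * (a m)\<^sup>2) div Suc m"
    by (intro div_le_mono) (simp add: copy_start_def)
  also have "\<dots> = (a m)\<^sup>2" by (rule nonzero_mult_div_cancel_left) simp
  finally show ?thesis .
qed

end

context T_occurrences
begin

lemma cnt_T_le_within_level:
  assumes "a m \<le> t" "t \<le> copy_start m"
  shows "cnt_T t \<le> cnt_T (a m) + lenC m + (t - ystart m) div Suc m * (cnt_y (Suc m) + M) + m"
proof (cases "t \<le> ystart m")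
  case True
  then have "cnt_T t \<le> cnt_T (a m) + (t - a m)" using assms(1) by (intro count_upto_le_add_diff)
  then show ?thesis using True by (simp add: ystart_def)
next
  case False
  define p where "p = (t - ystart m) div Suc m"
  have t_eq: "t = ystart m + p * Suc m + (t - ystart m) mod Suc m"
    using False div_mult_mod_eq[of "t - ystart m" "Suc m"] unfolding p_def by linarith
  have "p \<le> (a m)\<^sup>2" unfolding p_def using assms(2) by (rule Y_period_index_le)
  then have "cnt_T (ystart m + p * Suc m) \<le> cnt_T (ystart m) + p * (cnt_y (Suc m) + M)"
    by (rule cnt_T_Y_periods_le)
  moreover have "cnt_T t \<le> cnt_T (ystart m + p * Suc m) + (t - (ystart m + p * Suc m))"
    using t_eq by (intro count_upto_le_add_diff) linarith
  moreover have "t - (ystart m + p * Suc m) \<le> m"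
    using t_eq mod_less_divisor[of "Suc m" "t - ystart m"] by linarith
  moreover have "cnt_T (ystart m) \<le> cnt_T (a m) + lenC m"
    using count_upto_le_add_diff[OF a_le_ystart[of m], of occ_T] by (simp add: ystart_def)
  ultimately show ?thesis unfolding p_def by linarith
qed

lemma cnt_T_ge_within_level:
  assumes "a m \<le> t" "t \<le> copy_start m"
  shows "cnt_T (a m) + (t - ystart m) div Suc m * (cnt_y (Suc m) - M) \<le> cnt_T t"
proof -
  define p where "p = (t - ystart m) div Suc m"
  have "p \<le> (a m)\<^sup>2" unfolding p_def using assms(2) by (rule Y_period_index_le)
  then have "cnt_T (ystart m) + p * (cnt_y (Suc m) - M) \<le> cnt_T (ystart m + p * Suc m)"
    by (rule cnt_T_Y_periods_ge)
  moreover have "cnt_T (a m) \<le> cnt_T (ystart m)" by (intro count_upto_mono a_le_ystart)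
  moreover have "p = 0 \<or> ystart m + p * Suc m \<le> t"
    unfolding p_def using div_mult_mod_eq[of "t - ystart m" "Suc m"] by (cases "t \<le> ystart m") auto
  then have "cnt_T (a m) + p * (cnt_y (Suc m) - M) \<le> cnt_T t \<or> ystart m + p * Suc m \<le> t"
    using count_upto_mono[OF assms(1)] by auto
  ultimately show ?thesis unfolding p_def[symmetric] using count_upto_mono[of _ t occ_T] by fastforce
qed

lemma count_ge_if_density_ge:
  "c \<le> initial_density S n \<Longrightarrow> n > 0 \<Longrightarrow> c * real n \<le> real (count_upto S n)"
  by (simp add: initial_density_eq_count_upto pos_le_divide_eq)

lemma upper_density_occ_T_pos_if_occ_y:
  assumes "upper_density occ_y > 0"
  shows "upper_density occ_T > 0"
proof -
  obtain c where c: "c > 0" and often: "\<forall>N. \<exists>n\<ge>N. c \<le> initial_density occ_y n"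
    using assms upper_density_pos_iff by blast
  obtain m0 where m0: "\<forall>m\<ge>m0. lenC m \<le> a m" using lenC_le_a_eventually by blast
  obtain K where K: "\<forall>n\<ge>K. 2 * real M < c * real n" using exists_nat_gt_div[OF c] by blast
  have "\<exists>t\<ge>N. c / 8 \<le> initial_density occ_T t" for N
  proof -
    obtain n where n: "n \<ge> N + m0 + K + 1" "c \<le> initial_density occ_y n" using often by blast
    then obtain m where nm: "n = Suc m" "m \<ge> m0" by (cases n) auto
    define A2 where "A2 = real ((a m)\<^sup>2)"
    have "c * real n \<le> real (cnt_y n)" using n by (intro count_ge_if_density_ge) auto
    moreover have "2 * real M < c * real n" using K n(1) by simp
    ultimately have "c * real n / 2 \<le> real (cnt_y n - M)"
      using real_diff_le_of_nat_diff[of "cnt_y n" M] by linarith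
    then have "A2 * (c * real n / 2) \<le> A2 * real (cnt_y n - M)"
      unfolding A2_def by (intro mult_left_mono) auto
    also have "\<dots> \<le> real (cnt_T (copy_start m))"
      using cnt_T_copy_start_ge[of m] unfolding A2_def nm(1) of_nat_mult[symmetric] of_nat_le_iff .
    finally have low: "A2 * (c * real n / 2) \<le> real (cnt_T (copy_start m))" .
    have "copy_start m \<le> 4 * n * (a m)\<^sup>2"
      using a_Suc_le[of m] m0 nm copy_start_le_a_Suc[of m] by simp
    then have "real (copy_start m) \<le> 4 * real n * A2"
      unfolding A2_def by (metis of_nat_le_iff of_nat_mult of_nat_numeral)
    then have "c / 8 * real (copy_start m) \<le> c / 8 * (4 * real n * A2)"
      using c by (intro mult_left_mono) auto
    also have "\<dots> = A2 * (c * real n / 2)" by (simp add: algebra_simps)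
    finally have dense: "c / 8 * real (copy_start m) \<le> real (cnt_T (copy_start m))"
      using low by linarith
    have "n \<le> copy_start m"
      using Y_block_le_copy_start[of m] mult_le_mono2[OF one_le_a_sq[of m], of "Suc m"] nm(1) by simp
    then have "c / 8 \<le> initial_density occ_T (copy_start m)"
      using dense nm(1) by (simp add: initial_density_eq_count_upto pos_le_divide_eq)
    moreover have "N \<le> copy_start m" using \<open>n \<le> copy_start m\<close> n(1) by simp
    ultimately show ?thesis by blast
  qed
  moreover have "c / 8 > 0" using c by simp
  ultimately show ?thesis unfolding upper_density_pos_iff by blast
qed

end

context T_occurrences
begin

lemma lower_density_occ_T_not_pos_if_occ_y:
  assumes "\<not> lower_density occ_y > 0"
  shows "\<not> lower_density occ_T > 0"
proof
  assume "lower_density occ_T > 0"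
  then obtain c N where c: "c > 0" and N: "\<forall>t\<ge>N. c \<le> initial_density occ_T t"
    using lower_density_pos_iff by blast
  obtain m0 where m0: "\<forall>m\<ge>m0. lenC m \<le> a m" using lenC_le_a_eventually by blast
  obtain K where K: "\<forall>n\<ge>K. 2 * (real M + 3) < c * real n" using exists_nat_gt_div[OF c] by blast
  have "\<not> (\<forall>n\<ge>N + m0 + K + 1. c / 2 \<le> initial_density occ_y n)"
    using assms c unfolding lower_density_pos_iff by (metis half_gt_zero)
  then obtain n where n: "n \<ge> N + m0 + K + 1" "initial_density occ_y n < c / 2"
    by (auto simp: not_le)
  then obtain m where nm: "n = Suc m" "m \<ge> m0" by (cases n) auto
  define A2 where "A2 = real ((a m)\<^sup>2)"
  have "real (cnt_y n) < c / 2 * real n"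
    using n(2) nm(1) by (simp add: initial_density_eq_count_upto divide_less_eq)
  moreover have "2 * (real M + 3) < c * real n" using K n(1) by simp
  ultimately have sparse: "real (cnt_y n + M + 3) < c * real n" by simp
  have "cnt_T (copy_start m) \<le> (a m)\<^sup>2 * (cnt_y n + M + 3)"
    using count_upto_mono[OF copy_start_le_a_Suc[of m], of occ_T] cnt_T_a_Suc_le[of m] m0 nm by simp
  then have "real (cnt_T (copy_start m)) \<le> A2 * real (cnt_y n + M + 3)"
    unfolding A2_def of_nat_mult[symmetric] of_nat_le_iff .
  also have "\<dots> < A2 * (c * real n)"
    using sparse a_pos[of m] unfolding A2_def by (intro mult_strict_left_mono) auto
  also have "\<dots> \<le> c * real (copy_start m)"
  proof -
    have "real n * A2 \<le> real (copy_start m)"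
      using Y_block_le_copy_start[of m] nm(1) unfolding A2_def
      by (metis of_nat_le_iff of_nat_mult)
    then show ?thesis using c by (simp add: algebra_simps mult_left_mono)
  qed
  finally have "initial_density occ_T (copy_start m) < c"
    using one_le_a_sq[of m] Y_block_le_copy_start[of m]
    by (simp add: initial_density_eq_count_upto divide_less_eq)
  moreover have "N \<le> copy_start m"
    using Y_block_le_copy_start[of m] mult_le_mono2[OF one_le_a_sq[of m], of "Suc m"] nm(1) n(1)
    by simp
  ultimately show False using N by (simp add: not_le[symmetric])
qed

lemma cnt_T_sparse:
  assumes "\<epsilon> > 0" and sparse: "\<forall>n\<ge>n0. real (cnt_y n + M + 3) \<le> \<epsilon> * real n"
  shows "\<exists>N. \<forall>t\<ge>N. real (cnt_T t) \<le> 4 * \<epsilon> * real t"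
proof -
  obtain m0 where m0: "\<forall>m\<ge>m0. lenC m \<le> a m" using lenC_le_a_eventually by blast
  obtain m0' where m0': "\<forall>m\<ge>m0'. real (lenC m) \<le> \<epsilon> * real (a m)"
    using lenC_le_eps[OF assms(1)] by blast
  obtain K where K: "\<forall>n\<ge>K. 1 < \<epsilon> * real n" using exists_nat_gt_div[OF assms(1)] by blast
  define m1 where "m1 = n0 + m0 + m0' + K"
  have level_end: "real (cnt_T (a (Suc m))) \<le> \<epsilon> * real (a (Suc m))" if "m \<ge> m1" for m
  proof -
    have "cnt_T (a (Suc m)) \<le> (a m)\<^sup>2 * (cnt_y (Suc m) + M + 3)"
      using m0 that by (intro cnt_T_a_Suc_le) (simp add: m1_def)
    then have "real (cnt_T (a (Suc m))) \<le> real ((a m)\<^sup>2) * real (cnt_y (Suc m) + M + 3)"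
      unfolding of_nat_mult[symmetric] of_nat_le_iff .
    also have "\<dots> \<le> real ((a m)\<^sup>2) * (\<epsilon> * real (Suc m))"
      using sparse[rule_format, of "Suc m"] that by (intro mult_left_mono) (auto simp: m1_def)
    also have "\<dots> = \<epsilon> * real (Suc m * (a m)\<^sup>2)" by (simp only: of_nat_mult mult_ac)
    also have "\<dots> \<le> \<epsilon> * real (a (Suc m))"
      using assms(1) by (intro mult_left_mono) (simp_all only: of_nat_le_iff Y_block_le_a_Suc less_imp_le)
    finally show ?thesis .
  qed
  have within: "real (cnt_T t) \<le> 4 * \<epsilon> * real t"
    if m: "m \<ge> Suc m1" and t: "a m \<le> t" "t \<le> a (Suc m)" for m t
  proof (cases "t \<le> copy_start m")
    case True
    define p where "p = (t - ystart m) div Suc m"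
    have "cnt_T t \<le> cnt_T (a m) + lenC m + p * (cnt_y (Suc m) + M) + m"
      unfolding p_def by (rule cnt_T_le_within_level[OF t(1) True])
    then have cnt: "real (cnt_T t)
        \<le> real (cnt_T (a m)) + real (lenC m) + real p * real (cnt_y (Suc m) + M) + real m"
      unfolding of_nat_add[symmetric] of_nat_mult[symmetric] of_nat_le_iff .
    have "real (cnt_T (a m)) \<le> \<epsilon> * real (a m)" using level_end[of "m - 1"] m by (cases m) auto
    moreover have "real (lenC m) \<le> \<epsilon> * real (a m)" using m0' m by (simp add: m1_def)
    moreover have "real p * real (cnt_y (Suc m) + M) \<le> \<epsilon> * real t"
    proof -
      have "real (cnt_y (Suc m) + M) \<le> \<epsilon> * real (Suc m)"
        using sparse[rule_format, of "Suc m"] m by (simp add: m1_def)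
      then have "real p * real (cnt_y (Suc m) + M) \<le> real p * (\<epsilon> * real (Suc m))"
        by (intro mult_left_mono) auto
      also have "\<dots> = \<epsilon> * real (p * Suc m)" by (simp only: of_nat_mult mult_ac)
      also have "\<dots> \<le> \<epsilon> * real t"
      proof -
        have "p * Suc m \<le> t"
          using div_times_less_eq_dividend[of "t - ystart m" "Suc m"] unfolding p_def by linarith
        then show ?thesis using assms(1) by (intro mult_left_mono) (simp_all only: of_nat_le_iff less_imp_le)
      qed
      finally show ?thesis .
    qed
    moreover have "real m \<le> \<epsilon> * real (a m)"
    proof -
      have "1 < \<epsilon> * real m" using K[rule_format, of m] m by (simp add: m1_def)
      then have "real m * 1 \<le> real m * (\<epsilon> * real m)" by (intro mult_left_mono) auto
      then have "real m \<le> \<epsilon> * real m * real m" by (simp add: mult_ac)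
      also have "\<dots> \<le> \<epsilon> * real (a m)"
        using sq_le_a[of m] assms(1) by (simp add: mult.assoc mult_left_mono flip: of_nat_mult)
      finally show ?thesis .
    qed
    moreover have "\<epsilon> * real (a m) \<le> \<epsilon> * real t" using t assms(1) by (intro mult_left_mono) auto
    ultimately show ?thesis using cnt by linarith
  next
    case False
    have "cnt_T t \<le> cnt_T (a (Suc m))" using t(2) by (rule count_upto_mono)
    then have "real (cnt_T t) \<le> \<epsilon> * real (a (Suc m))" using level_end[of m] m by simp
    also have "\<dots> \<le> \<epsilon> * (2 * real t)"
      using False a_Suc[of m] a_le_ystart[of m] ystart_le_copy_start[of m] assms(1)
      by (intro mult_left_mono) auto
    finally show ?thesis using assms(1) by simp
  qed
  have "real (cnt_T t) \<le> 4 * \<epsilon> * real t" if t: "t \<ge> a (Suc m1)" for t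
  proof -
    obtain m where "m \<ge> Suc m1" "a m \<le> t" "t < a (Suc m)" using level_exists[OF t] by blast
    then show ?thesis by (intro within) auto
  qed
  then show ?thesis by blast
qed

lemma upper_density_occ_y_pos_if_occ_T:
  assumes "upper_density occ_T > 0"
  shows "upper_density occ_y > 0"
proof (rule ccontr)
  assume not_pos: "\<not> upper_density occ_y > 0"
  obtain c where c: "c > 0" and often: "\<forall>N. \<exists>t\<ge>N. c \<le> initial_density occ_T t"
    using assms upper_density_pos_iff by blast
  define \<epsilon> where "\<epsilon> = c / 8"
  have \<epsilon>: "\<epsilon> > 0" using c by (simp add: \<epsilon>_def)
  then have "\<not> (\<forall>N. \<exists>n\<ge>N. \<epsilon> / 2 \<le> initial_density occ_y n)"
    using not_pos unfolding upper_density_pos_iff by (metis half_gt_zero)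
  then obtain N1 where N1: "\<forall>n\<ge>N1. \<not> \<epsilon> / 2 \<le> initial_density occ_y n" by blast
  obtain K where K: "\<forall>n\<ge>K. 2 * (real M + 3) < \<epsilon> * real n" using exists_nat_gt_div[OF \<epsilon>] by blast
  have "real (cnt_y n + M + 3) \<le> \<epsilon> * real n" if "n \<ge> N1 + K + 1" for n
  proof -
    have "initial_density occ_y n < \<epsilon> / 2" using N1 that by (simp add: not_le)
    then have "real (cnt_y n) < \<epsilon> / 2 * real n"
      using that by (simp add: initial_density_eq_count_upto divide_less_eq)
    moreover have "2 * (real M + 3) < \<epsilon> * real n" using K that by simp
    ultimately show ?thesis by simp
  qed
  then obtain N where N: "\<forall>t\<ge>N. real (cnt_T t) \<le> 4 * \<epsilon> * real t"
    using cnt_T_sparse[OF \<epsilon>] by blast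
  obtain t where t: "t \<ge> N + 1" "c \<le> initial_density occ_T t" using often by blast
  then have "c * real t \<le> real (cnt_T t)" by (intro count_ge_if_density_ge) auto
  moreover have "real (cnt_T t) \<le> c / 2 * real t" using N t(1) by (simp add: \<epsilon>_def)
  moreover have "c * real t > 0" using c t(1) by simp
  ultimately show False by simp
qed

lemma cnt_T_dense:
  assumes "c > 0" and dense: "\<forall>n\<ge>n0. c * real n \<le> real (cnt_y n - M)"
  shows "\<exists>N. \<forall>t\<ge>N. c / 12 * real t \<le> real (cnt_T t)"
proof -
  obtain m0 where m0: "\<forall>m\<ge>m0. lenC m \<le> a m" using lenC_le_a_eventually by blast
  define m1 where "m1 = n0 + m0"
  have level_end: "c / 4 * real (a (Suc m)) \<le> real (cnt_T (copy_start m))" if "m \<ge> m1" for m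
  proof -
    have "a (Suc m) \<le> 4 * Suc m * (a m)\<^sup>2" using m0 that by (intro a_Suc_le) (simp add: m1_def)
    then have "real (a (Suc m)) \<le> 4 * real (Suc m) * real ((a m)\<^sup>2)"
      by (metis of_nat_le_iff of_nat_mult of_nat_numeral)
    then have "c / 4 * real (a (Suc m)) \<le> c / 4 * (4 * real (Suc m) * real ((a m)\<^sup>2))"
      using assms(1) by (intro mult_left_mono) auto
    also have "\<dots> = real ((a m)\<^sup>2) * (c * real (Suc m))" by (simp only: mult_ac) simp
    also have "\<dots> \<le> real ((a m)\<^sup>2) * real (cnt_y (Suc m) - M)"
      using dense[rule_format, of "Suc m"] that by (intro mult_left_mono) (auto simp: m1_def)
    also have "\<dots> \<le> real (cnt_T (copy_start m))"
      using cnt_T_copy_start_ge[of m] unfolding of_nat_mult[symmetric] of_nat_le_iff .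
    finally show ?thesis .
  qed
  have within: "c / 12 * real t \<le> real (cnt_T t)"
    if m: "m \<ge> Suc m1" and t: "a m \<le> t" "t \<le> a (Suc m)" for m t
  proof (cases "t \<le> copy_start m")
    case True
    define p where "p = (t - ystart m) div Suc m"
    have "cnt_T (a m) + p * (cnt_y (Suc m) - M) \<le> cnt_T t"
      unfolding p_def by (rule cnt_T_ge_within_level[OF t(1) True])
    then have cnt: "real (cnt_T (a m)) + real p * real (cnt_y (Suc m) - M) \<le> real (cnt_T t)"
      unfolding of_nat_add[symmetric] of_nat_mult[symmetric] of_nat_le_iff .
    obtain m' where m': "m = Suc m'" "m' \<ge> m1" using m by (cases m) auto
    have "real (cnt_T (copy_start m')) \<le> real (cnt_T (a (Suc m')))"
      using count_upto_mono[OF copy_start_le_a_Suc[of m'], of occ_T] by simp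
    then have start: "c / 4 * real (a m) \<le> real (cnt_T (a m))"
      using level_end[OF m'(2)] unfolding m'(1) by linarith
    have "c * real (Suc m) \<le> real (cnt_y (Suc m) - M)"
      using dense[rule_format, of "Suc m"] m by (simp add: m1_def)
    then have "real p * (c * real (Suc m)) \<le> real p * real (cnt_y (Suc m) - M)"
      by (intro mult_left_mono) auto
    then have periods: "c * real (p * Suc m) \<le> real p * real (cnt_y (Suc m) - M)"
      by (simp only: of_nat_mult mult_ac)
    have "t - ystart m < p * Suc m + Suc m"
      using div_mult_mod_eq[of "t - ystart m" "Suc m"] mod_less_divisor[of "Suc m" "t - ystart m"]
      unfolding p_def by linarith
    moreover have "ystart m \<le> 2 * a m" using m0 m by (simp add: ystart_def m1_def)
    moreover have "Suc m \<le> a m" by (rule Suc_le_a)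
    ultimately have "t \<le> 3 * a m + p * Suc m" by linarith
    then have "real t \<le> real (3 * a m + p * Suc m)" by (simp only: of_nat_le_iff)
    also have "\<dots> = 3 * real (a m) + real (p * Suc m)" by simp
    finally have "c / 12 * real t \<le> c / 12 * (3 * real (a m) + real (p * Suc m))"
      using assms(1) by (intro mult_left_mono) auto
    also have "\<dots> = c / 4 * real (a m) + c / 12 * real (p * Suc m)" by (simp add: algebra_simps)
    finally have "c / 12 * real t \<le> c / 4 * real (a m) + c / 12 * real (p * Suc m)" .
    moreover have "c / 12 * real (p * Suc m) \<le> c * real (p * Suc m)" using assms(1) by simp
    ultimately show ?thesis using cnt start periods by linarith
  next
    case False
    have "c / 12 * real t \<le> c / 4 * real (a (Suc m))" using t(2) assms(1) by simp
    also have "\<dots> \<le> real (cnt_T (copy_start m))" using level_end[of m] m by simp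
    also have "\<dots> \<le> real (cnt_T t)" using False by (simp add: count_upto_mono)
    finally show ?thesis .
  qed
  have "c / 12 * real t \<le> real (cnt_T t)" if t: "t \<ge> a (Suc m1)" for t
  proof -
    obtain m where "m \<ge> Suc m1" "a m \<le> t" "t < a (Suc m)" using level_exists[OF t] by blast
    then show ?thesis by (intro within) auto
  qed
  then show ?thesis by blast
qed

lemma lower_density_occ_T_pos_if_occ_y:
  assumes "lower_density occ_y > 0"
  shows "lower_density occ_T > 0"
proof -
  obtain c N0 where c: "c > 0" and N0: "\<forall>n\<ge>N0. c \<le> initial_density occ_y n"
    using assms lower_density_pos_iff by blast
  obtain K where K: "\<forall>n\<ge>K. 2 * real M < c * real n" using exists_nat_gt_div[OF c] by blast
  have "c / 2 * real n \<le> real (cnt_y n - M)" if "n \<ge> N0 + K + 1" for n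
  proof -
    have "c * real n \<le> real (cnt_y n)" using N0 that by (intro count_ge_if_density_ge) auto
    moreover have "2 * real M < c * real n" using K that by simp
    ultimately show ?thesis using real_diff_le_of_nat_diff[of "cnt_y n" M] by linarith
  qed
  then have "\<forall>n\<ge>N0 + K + 1. c / 2 * real n \<le> real (cnt_y n - M)" by blast
  then obtain N where N: "\<forall>t\<ge>N. c / 2 / 12 * real t \<le> real (cnt_T t)"
    using cnt_T_dense[OF half_gt_zero[OF c]] by blast
  have "c / 24 \<le> initial_density occ_T t" if "t \<ge> N + 1" for t
    using N that by (simp add: initial_density_eq_count_upto pos_le_divide_eq)
  moreover have "c / 24 > 0" using c by simp
  ultimately show ?thesis unfolding lower_density_pos_iff by blast
qed

lemma upper_density_occ_T_pos_iff: "upper_density occ_T > 0 \<longleftrightarrow> upper_density occ_y > 0"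
  using upper_density_occ_T_pos_if_occ_y upper_density_occ_y_pos_if_occ_T by blast

lemma lower_density_occ_T_pos_iff: "lower_density occ_T > 0 \<longleftrightarrow> lower_density occ_y > 0"
  using lower_density_occ_T_pos_if_occ_y lower_density_occ_T_not_pos_if_occ_y by blast

end

lemma real_le_div_if_mult_le:
  fixes x n len J0 :: nat
  assumes "x * n \<le> len" "J0 \<le> n" "J0 \<ge> 1"
  shows "real x \<le> real len / real J0"
proof -
  have "x * J0 \<le> len" using mult_le_mono2[OF assms(2), of x] assms(1) by linarith
  then have "real x * real J0 \<le> real len" by (metis of_nat_le_iff of_nat_mult)
  then show ?thesis using assms(3) by (simp add: pos_le_divide_eq)
qed

context T_construction
begin

lemma a_le_sq: "a m \<le> (a m)\<^sup>2"
  by (simp add: power2_eq_square)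

definition run_starts :: "nat \<Rightarrow> nat set" where
  "run_starts m = {q. q + L \<le> a m \<and> (\<forall>j<L. T (q + j) = T q)}"

definition Y_period_ends :: "nat \<Rightarrow> nat set" where
  "Y_period_ends m = {q. ystart m \<le> q \<and> q < copy_start m \<and>
     (q - ystart m) mod Suc m \<in> {Suc m - (L - 1)..<Suc m}}"

definition B_run_candidates :: "nat \<Rightarrow> nat set" where
  "B_run_candidates m =
     {a m - (L - 1)..<a m} \<union> {ystart m - (L - 1)..<ystart m} \<union> Y_period_ends m"

lemma run_starts_subset: "run_starts m \<subseteq> {..<a m}"
  using L_ge_3 by (auto simp: run_starts_def)

lemma finite_run_starts: "finite (run_starts m)"
  using run_starts_subset finite_subset by blast

lemma card_run_starts_le: "card (run_starts m) \<le> a m"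
  using card_mono[OF _ run_starts_subset] by simp

lemma no_run_in_C:
  assumes "a m \<le> q" "q + L \<le> ystart m"
  shows "\<exists>j<L. T (q + j) \<noteq> T q"
proof -
  obtain x where x: "x \<in> PiL k L" "is_prefix (C (Suc m)) x"
    using C_contained[of "Suc m"] by (auto simp: contained_def)
  have T_x: "T (q + j) = x (q - a m + j)" if "j < L" for j
  proof -
    have "q - a m + j < lenC m" using assms that by (simp add: ystart_def)
    then show ?thesis using T_in_C[of "q - a m + j" m] x(2) assms(1) by (simp add: is_prefix_def lenC_def)
  qed
  obtain j where "j < L" "x (q - a m + j) \<noteq> x (q - a m)" using PiL_no_run[OF x(1)] by blast
  moreover have "T q = x (q - a m)" using T_x[of 0] L_ge_3 by simp
  ultimately show ?thesis using T_x by (intro exI[of _ j]) auto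
qed

lemma no_run_in_Y_period:
  assumes "ystart m \<le> q" "q < copy_start m" "(q - ystart m) mod Suc m + L \<le> Suc m"
  shows "\<exists>j<L. T (q + j) \<noteq> T q"
proof -
  define t r where "t = (q - ystart m) div Suc m" and "r = (q - ystart m) mod Suc m"
  have q: "q = ystart m + t * Suc m + r"
    using assms(1) div_mult_mod_eq[of "q - ystart m" "Suc m"] unfolding t_def r_def by linarith
  have "t * Suc m < (a m)\<^sup>2 * Suc m" using q assms(2) by (simp add: copy_start_def mult.commute)
  then have t: "t < (a m)\<^sup>2" by (metis mult_less_cancel2)
  have T_y: "T (q + j) = y (r + j)" if "j < L" for j
  proof -
    have "r + j < Suc m" using assms(3) that unfolding r_def by linarith
    then have "T (ystart m + t * Suc m + (r + j)) = y (r + j)" by (rule T_in_Y[OF t])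
    moreover have "q + j = ystart m + t * Suc m + (r + j)" using q by simp
    ultimately show ?thesis by (simp only:)
  qed
  obtain j where "j < L" "y (r + j) \<noteq> y r" using PiL_no_run[OF y_in_PiL] by blast
  moreover have "T q = y r" using T_y[of 0] L_ge_3 by simp
  ultimately show ?thesis using T_y by (intro exI[of _ j]) auto
qed

text \<open>A run of \<open>L\<close> equal symbols in \<open>A (Suc m)\<close> cannot lie inside \<open>C (Suc m)\<close> or inside one
  period of the \<open>Y\<close>-block, both being words of \<open>PiL k L\<close>; so it lies in a copy of \<open>A m\<close> or
  starts shortly before one of the internal boundaries.\<close>

lemma run_starts_Suc_subset:
  "run_starts (Suc m) \<subseteq> run_starts m \<union> (\<lambda>q. q + copy_start m) ` run_starts m \<union> B_run_candidates m"
proof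
  fix q assume "q \<in> run_starts (Suc m)"
  then have qL: "q + L \<le> a (Suc m)" and run: "\<forall>j<L. T (q + j) = T q"
    by (auto simp: run_starts_def)
  consider "q + L \<le> a m" | "q < a m" "a m < q + L" | "a m \<le> q" "q < ystart m"
    | "ystart m \<le> q" "q < copy_start m" | "copy_start m \<le> q"
    by linarith
  then show "q \<in> run_starts m \<union> (\<lambda>q. q + copy_start m) ` run_starts m \<union> B_run_candidates m"
  proof cases
    case 1
    then show ?thesis using run by (simp add: run_starts_def)
  next
    case 2
    then show ?thesis by (auto simp: B_run_candidates_def)
  next
    case 3
    then have "ystart m < q + L" using no_run_in_C[of m q] run by (meson not_le)
    with 3 show ?thesis by (auto simp: B_run_candidates_def)
  next
    case 4
    then have "Suc m < (q - ystart m) mod Suc m + L" using no_run_in_Y_period[of m q] run by (meson not_le)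
    with 4 show ?thesis by (auto simp: B_run_candidates_def Y_period_ends_def)
  next
    case 5
    define p where "p = q - copy_start m"
    have pL: "p + L \<le> a m" using qL 5 a_Suc[of m] by (simp add: p_def)
    have "T (q + j) = T (p + j)" if "j < L" for j
      using T_in_copy[of "p + j" m] pL that 5 by (simp add: p_def)
    then have "\<forall>j<L. T (p + j) = T p" using run L_ge_3 by (metis add_0_right bot_nat_0.not_eq_extremum
          not_numeral_le_zero)
    then have "p \<in> run_starts m" using pL by (simp add: run_starts_def)
    moreover have "q = p + copy_start m" using 5 by (simp add: p_def)
    ultimately show ?thesis by blast
  qed
qed

lemma B_run_candidates_subset: "B_run_candidates m \<subseteq> {..<copy_start m}"
  by (auto simp: B_run_candidates_def Y_period_ends_def copy_start_def ystart_def)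

lemma card_B_run_candidates_window:
  "card (B_run_candidates m \<inter> {u..<u+len}) \<le> 2 * (L - 1) + (L - 1) * (len div Suc m + 1)"
proof -
  define R where "R = {Suc m - (L - 1)..<Suc m}"
  have "Y_period_ends m \<inter> {u..<u+len} \<subseteq> {q \<in> {u..<u+len}. ystart m \<le> q \<and> (q - ystart m) mod Suc m \<in> R}"
    by (auto simp: Y_period_ends_def R_def)
  then have "card (Y_period_ends m \<inter> {u..<u+len})
      \<le> card {q \<in> {u..<u+len}. ystart m \<le> q \<and> (q - ystart m) mod Suc m \<in> R}"
    by (intro card_mono) auto
  also have "\<dots> \<le> (len div Suc m + 1) * card R"
    by (rule card_residues_in_window) (auto simp: R_def)
  also have "\<dots> \<le> (len div Suc m + 1) * (L - 1)" by (intro mult_le_mono2) (simp add: R_def)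
  finally have Y: "card (Y_period_ends m \<inter> {u..<u+len}) \<le> (L - 1) * (len div Suc m + 1)"
    by (simp add: mult.commute)
  let ?A = "{a m - (L - 1)..<a m}" and ?B = "{ystart m - (L - 1)..<ystart m}"
  have "card (B_run_candidates m \<inter> {u..<u+len}) \<le> card (?A \<union> ?B \<union> (Y_period_ends m \<inter> {u..<u+len}))"
    by (rule card_mono) (auto simp: B_run_candidates_def)
  moreover have "card (?A \<union> ?B \<union> (Y_period_ends m \<inter> {u..<u+len}))
      \<le> card (?A \<union> ?B) + card (Y_period_ends m \<inter> {u..<u+len})" by (rule card_Un_le)
  moreover have "card (?A \<union> ?B) \<le> card ?A + card ?B" by (rule card_Un_le)
  moreover have "card ?A \<le> L - 1" "card ?B \<le> L - 1" by simp_all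
  ultimately show ?thesis using Y by linarith
qed

lemma card_run_starts_Suc: "card (run_starts (Suc m)) * Suc m \<le> 4 * L * a (Suc m)"
proof -
  let ?S = "(\<lambda>q. q + copy_start m) ` run_starts m"
  have "run_starts (Suc m) \<subseteq> run_starts m \<union> ?S \<union> (B_run_candidates m \<inter> {0..<0 + a (Suc m)})"
    using run_starts_Suc_subset run_starts_subset[of "Suc m"] by auto
  then have "card (run_starts (Suc m))
      \<le> card (run_starts m) + card ?S + card (B_run_candidates m \<inter> {0..<0 + a (Suc m)})"
    by (meson card_Un_le card_mono finite_Un finite_imageI finite_Int finite_atLeastLessThan
        finite_run_starts le_trans add_le_mono1)
  also have "\<dots> \<le> a m + a m + (2 * (L - 1) + (L - 1) * (a (Suc m) div Suc m + 1))"
    using card_run_starts_le[of m] card_image_le[OF finite_run_starts, of "\<lambda>q. q + copy_start m" m]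
      card_B_run_candidates_window[of m 0 "a (Suc m)"] by linarith
  finally have "card (run_starts (Suc m)) \<le> 2 * a m + 3 * (L - 1) + (L - 1) * (a (Suc m) div Suc m)"
    by simp
  then have "card (run_starts (Suc m)) * Suc m
      \<le> (2 * a m + 3 * (L - 1) + (L - 1) * (a (Suc m) div Suc m)) * Suc m"
    by (rule mult_le_mono1)
  also have "\<dots> = 2 * (a m * Suc m) + 3 * (L - 1) * Suc m + (L - 1) * (a (Suc m) div Suc m * Suc m)"
    by (simp only: add_mult_distrib mult.assoc)
  also have "\<dots> \<le> 2 * a (Suc m) + 3 * (L - 1) * a (Suc m) + (L - 1) * a (Suc m)"
  proof (intro add_mono mult_le_mono2)
    show "a m * Suc m \<le> a (Suc m)"
      using Y_block_le_a_Suc[of m] mult_le_mono2[OF a_le_sq[of m], of "Suc m"] by (simp add: mult.commute)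
    show "Suc m \<le> a (Suc m)" using Suc_le_a[of "Suc m"] by simp
    show "a (Suc m) div Suc m * Suc m \<le> a (Suc m)" by (rule div_times_less_eq_dividend)
  qed
  also have "\<dots> = (2 + 4 * (L - 1)) * a (Suc m)" by (simp only: add_mult_distrib mult.assoc)
  also have "\<dots> \<le> 4 * L * a (Suc m)" using L_ge_3 by (intro mult_le_mono1) simp
  finally show ?thesis .
qed

lemma card_run_starts: "i \<ge> 1 \<Longrightarrow> card (run_starts i) * i \<le> 4 * L * a i"
  using card_run_starts_Suc[of "i - 1"] by (cases i) auto

lemma card_run_starts_suffix_mono:
  assumes "i \<le> m" "len \<le> a i"
  shows "card (run_starts m \<inter> {a m - len..<a m}) \<le> card (run_starts i \<inter> {a i - len..<a i})"
proof -
  define c where "c = a m - a i"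
  have ai: "a i \<le> a m" using a_mono[OF assms(1)] .
  have "run_starts m \<inter> {a m - len..<a m} \<subseteq> (\<lambda>p. p + c) ` (run_starts i \<inter> {a i - len..<a i})"
  proof
    fix q assume q: "q \<in> run_starts m \<inter> {a m - len..<a m}"
    then have qL: "q + L \<le> a m" and run: "\<forall>j<L. T (q + j) = T q" and "a m - len \<le> q"
      by (auto simp: run_starts_def)
    define p where "p = q - c"
    have qc: "q = p + c" and pL: "p + L \<le> a i" and pl: "a i - len \<le> p"
      using qL \<open>a m - len \<le> q\<close> assms(2) ai unfolding p_def c_def by arith+
    have T_p: "T (q + j) = T (p + j)" if "j < L" for j
    proof -
      have "T (a m - a i + (p + j)) = T (p + j)" using T_suffix[OF assms(1)] pL that by simp
      moreover have "q + j = a m - a i + (p + j)" using qc unfolding c_def by simp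
      ultimately show ?thesis by (simp only:)
    qed
    have "T (p + j) = T p" if "j < L" for j
      using T_p[OF that] T_p[of 0] run that L_ge_3 by simp
    moreover have "p < a i" using pL L_ge_3 by simp
    ultimately have "p \<in> run_starts i \<inter> {a i - len..<a i}" using pL pl by (simp add: run_starts_def)
    then show "q \<in> (\<lambda>p. p + c) ` (run_starts i \<inter> {a i - len..<a i})" using qc by blast
  qed
  then have "card (run_starts m \<inter> {a m - len..<a m})
      \<le> card ((\<lambda>p. p + c) ` (run_starts i \<inter> {a i - len..<a i}))"
    by (intro card_mono) (auto simp: finite_run_starts)
  also have "\<dots> \<le> card (run_starts i \<inter> {a i - len..<a i})" by (rule card_image_le) (simp add: finite_run_starts)
  finally show ?thesis .
qed

lemma run_starts_prefix_subset:
  "len \<le> a i \<Longrightarrow> run_starts m \<inter> {..<len} \<subseteq> run_starts i \<union> {a i - (L - 1)..<a i}"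
  by (auto simp: run_starts_def)

end

context T_construction
begin

lemma card_run_starts_le_div:
  assumes "J0 \<ge> 1" "J0 \<le> i" "a i \<le> len"
  shows "real (card (run_starts i)) \<le> 4 * real L * real len / real J0"
proof -
  have "card (run_starts i) * i \<le> 4 * L * a i" using card_run_starts[of i] assms by simp
  also have "\<dots> \<le> 4 * L * len" using assms(3) by simp
  finally have "real (card (run_starts i)) \<le> real (4 * L * len) / real J0"
    using assms by (intro real_le_div_if_mult_le) auto
  then show ?thesis by simp
qed

lemma card_B_run_candidates_window_le_div:
  assumes "J0 \<ge> 1" "J0 \<le> Suc i"
  shows "real (card (B_run_candidates i \<inter> {u..<u+len})) \<le> 3 * real L + real L * real len / real J0"
proof -
  have "card (B_run_candidates i \<inter> {u..<u+len}) \<le> 3 * (L - 1) + (L - 1) * (len div Suc i)"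
    using card_B_run_candidates_window[of i u len] by simp
  then have "real (card (B_run_candidates i \<inter> {u..<u+len})) \<le> real (3 * (L - 1) + (L - 1) * (len div Suc i))"
    by (simp only: of_nat_le_iff)
  also have "\<dots> = 3 * real (L - 1) + real (L - 1) * real (len div Suc i)" by simp
  also have "\<dots> \<le> 3 * real L + real L * (real len / real J0)"
  proof (intro add_mono mult_mono)
    show "real (len div Suc i) \<le> real len / real J0"
      using div_times_less_eq_dividend[of len "Suc i"] assms by (intro real_le_div_if_mult_le) auto
  qed auto
  finally show ?thesis by simp
qed

lemma card_run_starts_Suc_window_le:
  assumes "J0 \<ge> 1" "J0 \<le> i" "a i \<le> len"
  shows "real (card (run_starts (Suc i) \<inter> {u..<u+len}))
    \<le> (1 + 5 * real L) / real J0 * real len + 3 * real L"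
proof -
  let ?W = "{u..<u+len}" and ?S = "(\<lambda>q. q + copy_start i) ` run_starts i"
  have "card (run_starts (Suc i) \<inter> ?W) \<le> card (run_starts i \<inter> ?W \<union> ?S \<inter> ?W \<union> B_run_candidates i \<inter> ?W)"
    using run_starts_Suc_subset[of i] by (intro card_mono) auto
  also have "\<dots> \<le> card (run_starts i \<inter> ?W \<union> ?S \<inter> ?W) + card (B_run_candidates i \<inter> ?W)"
    by (rule card_Un_le)
  also have "card (run_starts i \<inter> ?W \<union> ?S \<inter> ?W) \<le> card (run_starts i \<inter> ?W) + card (?S \<inter> ?W)"
    by (rule card_Un_le)
  finally have split: "card (run_starts (Suc i) \<inter> ?W)
      \<le> card (run_starts i \<inter> ?W) + card (?S \<inter> ?W) + card (B_run_candidates i \<inter> ?W)" by simp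
  have in_copy1: "card (run_starts i \<inter> ?W) \<le> card (run_starts i)"
    by (rule card_mono[OF finite_run_starts]) simp
  have "card (?S \<inter> ?W) \<le> card ?S" by (rule card_mono) (simp_all add: finite_run_starts)
  also have "\<dots> \<le> card (run_starts i)" by (rule card_image_le[OF finite_run_starts])
  finally have in_copy2: "card (?S \<inter> ?W) \<le> card (run_starts i)" .
  have copies: "real (card (run_starts i \<inter> ?W)) + real (card (?S \<inter> ?W))
      \<le> (1 + 4 * real L) / real J0 * real len"
  proof (cases "Suc i * (a i)\<^sup>2 < len")
    case True
    text \<open>The window covers the whole \<open>Y\<close>-block, which is much longer than \<open>A i\<close>.\<close>
    have "card (run_starts i) * Suc i \<le> len"
      using mult_le_mono1[OF le_trans[OF card_run_starts_le a_le_sq], of i "Suc i"] True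
      by (simp add: mult.commute)
    then have "real (card (run_starts i)) \<le> real len / real J0"
      using assms by (intro real_le_div_if_mult_le) auto
    moreover have "2 * (real len / real J0) \<le> (1 + 4 * real L) * (real len / real J0)"
      using L_ge_3 by (intro mult_right_mono) auto
    ultimately show ?thesis using in_copy1 in_copy2 by simp
  next
    case False
    text \<open>The two copies of \<open>A i\<close> are too far apart to meet the same window.\<close>
    have "run_starts i \<inter> ?W = {} \<or> ?S \<inter> ?W = {}"
    proof (rule ccontr)
      assume "\<not> (run_starts i \<inter> ?W = {} \<or> ?S \<inter> ?W = {})"
      then obtain x y where "x \<in> run_starts i" "x \<in> ?W" "y \<in> ?S" "y \<in> ?W" by blast
      moreover have "a i + Suc i * (a i)\<^sup>2 \<le> copy_start i" by (simp add: copy_start_def ystart_def)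
      ultimately show False using False run_starts_subset[of i] by auto
    qed
    then have "real (card (run_starts i \<inter> ?W)) + real (card (?S \<inter> ?W)) \<le> real (card (run_starts i))"
      using in_copy1 in_copy2 by auto
    also have "\<dots> \<le> 4 * real L * real len / real J0" by (rule card_run_starts_le_div[OF assms])
    also have "\<dots> \<le> (1 + 4 * real L) * real len / real J0"
      by (intro divide_right_mono mult_right_mono) auto
    also have "\<dots> = (1 + 4 * real L) / real J0 * real len" by simp
    finally show ?thesis .
  qed
  have "real (card (B_run_candidates i \<inter> ?W)) \<le> 3 * real L + real L * real len / real J0"
    using card_B_run_candidates_window_le_div[OF assms(1)] assms(2) by simp
  moreover have "(1 + 4 * real L) / real J0 * real len + real L * real len / real J0
      = (1 + 5 * real L) / real J0 * real len"
    using assms(1) by (simp add: field_simps)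
  ultimately show ?thesis using split copies by linarith
qed

definition edge_bound :: "nat \<Rightarrow> real \<Rightarrow> real" where
  "edge_bound J0 x = 6 * real L / real J0 * x + 4 * real L + real (a J0)"

lemma a_le_edge_bound: "x \<ge> 0 \<Longrightarrow> real (a J0) \<le> edge_bound J0 x"
  unfolding edge_bound_def by (auto intro!: add_nonneg_nonneg)

lemma level_bound_le_edge_bound:
  assumes "x \<ge> 0"
  shows "(1 + 5 * real L) / real J0 * x + 4 * real L \<le> edge_bound J0 x"
proof -
  have "(1 + 5 * real L) / real J0 * x \<le> 6 * real L / real J0 * x"
    using L_ge_3 assms by (intro mult_right_mono divide_right_mono) auto
  then show ?thesis unfolding edge_bound_def by simp
qed

lemma card_run_starts_le_edge_bound:
  assumes "J0 \<ge> 1" "a m \<le> len"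
  shows "real (card (run_starts m)) \<le> edge_bound J0 (real len)"
proof (cases "m < J0")
  case True
  then have "real (card (run_starts m)) \<le> real (a J0)"
    using card_run_starts_le[of m] a_mono[of m J0] by simp
  also have "\<dots> \<le> edge_bound J0 (real len)" by (rule a_le_edge_bound) simp
  finally show ?thesis .
next
  case False
  then have "real (card (run_starts m)) \<le> 4 * real L * real len / real J0"
    using assms by (intro card_run_starts_le_div) auto
  also have "\<dots> \<le> edge_bound J0 (real len)"
    using level_bound_le_edge_bound[of "real len" J0] L_ge_3
    by (smt (verit, best) divide_right_mono mult_right_mono of_nat_0_le_iff times_divide_eq_left)
  finally show ?thesis .
qed

lemma card_run_starts_suffix_le:
  assumes "J0 \<ge> 1"
  shows "real (card (run_starts m \<inter> {a m - len..<a m})) \<le> edge_bound J0 (real len)"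
proof (cases "len < a J0")
  case True
  have "card (run_starts m \<inter> {a m - len..<a m}) \<le> card {a m - len..<a m}" by (rule card_mono) auto
  with True have "real (card (run_starts m \<inter> {a m - len..<a m})) \<le> real (a J0)" by simp
  also have "\<dots> \<le> edge_bound J0 (real len)" by (rule a_le_edge_bound) simp
  finally show ?thesis .
next
  case False
  then obtain i where i: "J0 \<le> i" "a i \<le> len" "len < a (Suc i)" using level_exists[of J0 len] by auto
  show ?thesis
  proof (cases "m \<le> i")
    case True
    have "card (run_starts m \<inter> {a m - len..<a m}) \<le> card (run_starts m)"
      by (rule card_mono[OF finite_run_starts]) simp
    moreover have "real (card (run_starts m)) \<le> edge_bound J0 (real len)"
      using card_run_starts_le_edge_bound[OF assms] a_mono[OF True] i(2) by simp
    ultimately show ?thesis by linarith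
  next
    case False
    define u where "u = a (Suc i) - len"
    have "card (run_starts m \<inter> {a m - len..<a m}) \<le> card (run_starts (Suc i) \<inter> {u..<u+len})"
      using card_run_starts_suffix_mono[of "Suc i" m len] False i(3) by (simp add: u_def)
    then have "real (card (run_starts m \<inter> {a m - len..<a m}))
        \<le> (1 + 5 * real L) / real J0 * real len + 3 * real L"
      using card_run_starts_Suc_window_le[OF assms i(1,2), of u] by linarith
    also have "\<dots> \<le> edge_bound J0 (real len)" using level_bound_le_edge_bound[of "real len" J0] by simp
    finally show ?thesis .
  qed
qed

lemma card_run_starts_prefix_le:
  assumes "J0 \<ge> 1"
  shows "real (card (run_starts m \<inter> {..<len})) \<le> edge_bound J0 (real len)"
proof (cases "len < a J0")
  case True
  have "card (run_starts m \<inter> {..<len}) \<le> card {..<len}" by (rule card_mono) auto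
  with True have "real (card (run_starts m \<inter> {..<len})) \<le> real (a J0)" by simp
  also have "\<dots> \<le> edge_bound J0 (real len)" by (rule a_le_edge_bound) simp
  finally show ?thesis .
next
  case False
  then obtain i where i: "J0 \<le> i" "a i \<le> len" "len < a (Suc i)" using level_exists[of J0 len] by auto
  show ?thesis
  proof (cases "m \<le> i")
    case True
    have "card (run_starts m \<inter> {..<len}) \<le> card (run_starts m)"
      by (rule card_mono[OF finite_run_starts]) simp
    moreover have "real (card (run_starts m)) \<le> edge_bound J0 (real len)"
      using card_run_starts_le_edge_bound[OF assms] a_mono[OF True] i(2) by simp
    ultimately show ?thesis by linarith
  next
    case False
    let ?E = "{a (Suc i) - (L - 1)..<a (Suc i)}"
    have "run_starts m \<inter> {..<len} \<subseteq> (run_starts (Suc i) \<inter> {0..<0 + len}) \<union> ?E"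
      using run_starts_prefix_subset[of len "Suc i" m] i(3) by auto
    then have "card (run_starts m \<inter> {..<len}) \<le> card ((run_starts (Suc i) \<inter> {0..<0 + len}) \<union> ?E)"
      by (rule card_mono[rotated]) (simp add: finite_run_starts)
    also have "\<dots> \<le> card (run_starts (Suc i) \<inter> {0..<0 + len}) + card ?E" by (rule card_Un_le)
    finally have "card (run_starts m \<inter> {..<len}) \<le> card (run_starts (Suc i) \<inter> {0..<0 + len}) + L"
      by simp
    then have "real (card (run_starts m \<inter> {..<len}))
        \<le> (1 + 5 * real L) / real J0 * real len + 4 * real L"
      using card_run_starts_Suc_window_le[OF assms i(1,2), of 0] by linarith
    also have "\<dots> \<le> edge_bound J0 (real len)" by (rule level_bound_le_edge_bound) simp
    finally show ?thesis .
  qed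
qed

end

context T_construction
begin

definition window_bound :: "nat \<Rightarrow> real \<Rightarrow> real" where
  "window_bound J0 x = edge_bound J0 (x + real L) + edge_bound J0 x + 3 * real L + real L * x / real J0"

lemma a_le_window_bound:
  assumes "x \<ge> 0"
  shows "real (a J0) \<le> window_bound J0 x"
proof -
  have "0 \<le> real L * x / real J0" "0 \<le> real (a J0)" using assms by simp_all
  with a_le_edge_bound[of "x + real L" J0] a_le_edge_bound[OF assms, of J0] assms show ?thesis
    unfolding window_bound_def by linarith
qed

lemma run_starts_Suc_window_first_copy:
  "u + len + L \<le> a m + 1 \<Longrightarrow> run_starts (Suc m) \<inter> {u..<u+len} \<subseteq> run_starts m \<inter> {u..<u+len}"
  by (auto simp: run_starts_def)

lemma card_run_starts_Suc_window_second_copy: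
  assumes "copy_start m \<le> u"
  shows "card (run_starts (Suc m) \<inter> {u..<u+len})
    \<le> card (run_starts m \<inter> {u - copy_start m..<(u - copy_start m) + len})"
proof -
  let ?S = "(\<lambda>q. q + copy_start m) ` run_starts m"
  have "run_starts (Suc m) \<inter> {u..<u+len} \<subseteq> ?S \<inter> {u..<u+len}"
  proof
    fix q assume q: "q \<in> run_starts (Suc m) \<inter> {u..<u+len}"
    then have "q \<notin> run_starts m" "q \<notin> B_run_candidates m"
      using assms run_starts_subset[of m] B_run_candidates_subset[of m] a_le_ystart[of m]
        ystart_le_copy_start[of m] by auto
    then show "q \<in> ?S \<inter> {u..<u+len}" using q run_starts_Suc_subset[of m] by blast
  qed
  then have "card (run_starts (Suc m) \<inter> {u..<u+len}) \<le> card (?S \<inter> {u..<u+len})"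
    by (rule card_mono[rotated]) (simp add: finite_run_starts)
  also have "\<dots> \<le> card (run_starts m \<inter> {u - copy_start m..<u + len - copy_start m})"
    by (rule card_image_add_window)
  also have "u + len - copy_start m = (u - copy_start m) + len" using assms by simp
  finally show ?thesis .
qed

lemma card_run_starts_Suc_window_middle:
  assumes "J0 \<ge> 1" "J0 \<le> Suc m" "a m + 1 < u + len + L" "u < copy_start m"
  shows "real (card (run_starts (Suc m) \<inter> {u..<u+len})) \<le> window_bound J0 (real len)"
proof -
  let ?W = "{u..<u+len}" and ?S = "(\<lambda>q. q + copy_start m) ` run_starts m"
  have "run_starts (Suc m) \<inter> ?W
      \<subseteq> (run_starts m \<inter> {a m - (len + L)..<a m}) \<union> (?S \<inter> ?W) \<union> (B_run_candidates m \<inter> ?W)"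
  proof
    fix q assume q: "q \<in> run_starts (Suc m) \<inter> ?W"
    show "q \<in> (run_starts m \<inter> {a m - (len + L)..<a m}) \<union> (?S \<inter> ?W) \<union> (B_run_candidates m \<inter> ?W)"
    proof (cases "q \<in> run_starts m")
      case True
      then have "q < a m" using run_starts_subset by auto
      moreover have "a m - (len + L) \<le> q" using assms(3) q by auto
      ultimately show ?thesis using True by auto
    qed (use q run_starts_Suc_subset[of m] in blast)
  qed
  then have "card (run_starts (Suc m) \<inter> ?W)
      \<le> card ((run_starts m \<inter> {a m - (len + L)..<a m}) \<union> (?S \<inter> ?W) \<union> (B_run_candidates m \<inter> ?W))"
    by (rule card_mono[rotated]) (simp add: finite_run_starts)
  also have "\<dots> \<le> card ((run_starts m \<inter> {a m - (len + L)..<a m}) \<union> (?S \<inter> ?W)) + card (B_run_candidates m \<inter> ?W)"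
    by (rule card_Un_le)
  also have "card ((run_starts m \<inter> {a m - (len + L)..<a m}) \<union> (?S \<inter> ?W))
      \<le> card (run_starts m \<inter> {a m - (len + L)..<a m}) + card (?S \<inter> ?W)"
    by (rule card_Un_le)
  finally have split: "card (run_starts (Suc m) \<inter> ?W) \<le> card (run_starts m \<inter> {a m - (len + L)..<a m})
      + card (?S \<inter> ?W) + card (B_run_candidates m \<inter> ?W)" by simp
  have "card (?S \<inter> ?W) \<le> card (run_starts m \<inter> {u - copy_start m..<u + len - copy_start m})"
    by (rule card_image_add_window)
  also have "\<dots> \<le> card (run_starts m \<inter> {..<len})"
    using assms(4) by (intro card_mono) (auto simp: finite_run_starts)
  finally have "card (?S \<inter> ?W) \<le> card (run_starts m \<inter> {..<len})" .
  then show ?thesis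
    using split card_run_starts_suffix_le[OF assms(1), of m "len + L"]
      card_run_starts_prefix_le[OF assms(1), of m len]
      card_B_run_candidates_window_le_div[OF assms(1,2), of u len]
    unfolding window_bound_def by simp
qed

text \<open>Splitting a window at the two copies of \<open>A m\<close> inside \<open>A (Suc m)\<close>: a window inside one
  copy is handled by induction, a window across the middle by the bounds on suffixes and prefixes.\<close>

lemma card_run_starts_window_le:
  assumes "J0 \<ge> 1"
  shows "real (card (run_starts m \<inter> {u..<u+len})) \<le> window_bound J0 (real len)"
proof (induction m arbitrary: u)
  case 0
  have "card (run_starts 0 \<inter> {u..<u+len}) \<le> a J0"
    using card_mono[OF finite_run_starts, of "run_starts 0 \<inter> {u..<u+len}" 0] card_run_starts_le[of 0]
      a_mono[of 0 J0] by auto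
  then show ?case using a_le_window_bound[of "real len" J0] by simp
next
  case (Suc m)
  show ?case
  proof (cases "Suc m \<le> J0")
    case True
    have "card (run_starts (Suc m) \<inter> {u..<u+len}) \<le> a J0"
      using card_mono[OF finite_run_starts, of "run_starts (Suc m) \<inter> {u..<u+len}" "Suc m"]
        card_run_starts_le[of "Suc m"] a_mono[OF True] by auto
    then show ?thesis using a_le_window_bound[of "real len" J0] by simp
  next
    case False
    consider "u + len + L \<le> a m + 1" | "copy_start m \<le> u" | "a m + 1 < u + len + L" "u < copy_start m"
      by linarith
    then show ?thesis
    proof cases
      case 1
      then have "card (run_starts (Suc m) \<inter> {u..<u+len}) \<le> card (run_starts m \<inter> {u..<u+len})"
        by (intro card_mono run_starts_Suc_window_first_copy) (auto simp: finite_run_starts)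
      then show ?thesis using Suc.IH[of u] by linarith
    next
      case 2
      then show ?thesis
        using card_run_starts_Suc_window_second_copy[OF 2, of len] Suc.IH[of "u - copy_start m"]
        by linarith
    next
      case 3
      then show ?thesis using False by (intro card_run_starts_Suc_window_middle[OF assms]) auto
    qed
  qed
qed

lemma window_bound_small:
  assumes "c > 0"
  shows "\<exists>J0 N. J0 \<ge> 1 \<and> N \<ge> 1 \<and> (\<forall>len\<ge>N. window_bound J0 (real len) \<le> c * real len)"
proof -
  obtain J0 :: nat where J0: "26 * real L / c < J0" using reals_Archimedean2 by blast
  have "0 \<le> 26 * real L / c" using assms by simp
  then have J0_pos: "real J0 > 0" using J0 by linarith
  have slope: "13 * real L / real J0 \<le> c / 2"
  proof -
    have "26 * real L < c * real J0" using J0 assms by (simp add: divide_less_eq mult.commute)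
    then show ?thesis using J0_pos by (simp add: divide_le_eq)
  qed
  define K where "K = 6 * real L * real L / real J0 + 11 * real L + 2 * real (a J0)"
  obtain N where N: "\<forall>n\<ge>N. 2 * K < c * real n" using exists_nat_gt_div[OF assms] by blast
  have "window_bound J0 (real len) \<le> c * real len" if "len \<ge> Suc N" for len
  proof -
    have "window_bound J0 (real len) = 13 * real L / real J0 * real len + K"
      unfolding window_bound_def edge_bound_def K_def using J0_pos by (simp add: field_simps)
    moreover have "13 * real L / real J0 * real len \<le> c / 2 * real len"
      using slope by (intro mult_right_mono) auto
    moreover have "2 * K < c * real len" using N that by simp
    ultimately show ?thesis by simp
  qed
  then show ?thesis using J0_pos by (intro exI[of _ J0] exI[of _ "Suc N"]) auto
qed

lemma card_occurrences_T_window_le: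
  assumes run: "\<forall>j<L. z (i + j) = z i"
  shows "card (occurrences T z (i + L) \<inter> {m+1..m+len})
    \<le> card (run_starts (m + i + len + L) \<inter> {m+1+i..<(m+1+i)+len})"
proof -
  let ?O = "occurrences T z (i + L) \<inter> {m+1..m+len}" and ?J = "m + i + len + L"
  have "(\<lambda>p. p + i) ` ?O \<subseteq> run_starts ?J \<inter> {m+1+i..<(m+1+i)+len}"
  proof
    fix q assume "q \<in> (\<lambda>p. p + i) ` ?O"
    then obtain p where p: "p \<in> occurrences T z (i + L)" "m + 1 \<le> p" "p \<le> m + len" "q = p + i"
      by auto
    then have T_p: "T (p + j) = z j" if "j < i + L" for j using that by (simp add: occurrences_def)
    have "T (q + j) = T q" if "j < L" for j
    proof -
      have "T (q + j) = z (i + j)" using T_p[of "i + j"] that p(4) by (simp add: add.assoc)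
      moreover have "T q = z i" using T_p[of i] p(4) L_ge_3 by simp
      ultimately show ?thesis using run that by simp
    qed
    moreover have "q + L \<le> a ?J" using Suc_le_a[of ?J] p by simp
    ultimately show "q \<in> run_starts ?J \<inter> {m+1+i..<(m+1+i)+len}" using p by (simp add: run_starts_def)
  qed
  then have "card ((\<lambda>p. p + i) ` ?O) \<le> card (run_starts ?J \<inter> {m+1+i..<(m+1+i)+len})"
    by (rule card_mono[rotated]) (simp add: finite_run_starts)
  moreover have "card ((\<lambda>p. p + i) ` ?O) = card ?O" by (rule card_image) (simp add: inj_on_def)
  ultimately show ?thesis by simp
qed

lemma banach_upper_occurrences_T_not_pos:
  assumes "z \<in> Sigma k" "z \<notin> PiL k L"
  shows "\<exists>M. \<not> banach_upper (occurrences T z M) > 0"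
proof -
  obtain i where i: "\<forall>j<L. z (i + j) = z i" using run_if_notin_PiL[OF assms] by blast
  have "\<not> banach_upper (occurrences T z (i + L)) > 0"
  proof (rule banach_upper_not_pos_if_sparse_windows, intro allI impI)
    fix c :: real assume "c > 0"
    then obtain J0 N where JN: "J0 \<ge> 1" "N \<ge> 1" "\<forall>len\<ge>N. window_bound J0 (real len) \<le> c * real len"
      using window_bound_small by blast
    have "window_density (occurrences T z (i + L)) m len \<le> c" if "len \<ge> N" for len m
    proof -
      have "real (card (occurrences T z (i + L) \<inter> {m+1..m+len})) \<le> window_bound J0 (real len)"
        using card_occurrences_T_window_le[OF i, of m len]
          card_run_starts_window_le[OF JN(1), of "m + i + len + L" "m + 1 + i" len] by linarith
      also have "\<dots> \<le> c * real len" using JN(3) that by blast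
      finally show ?thesis using JN(2) that by (simp add: window_density_def divide_le_eq)
    qed
    then show "\<exists>N. \<forall>n\<ge>N. \<forall>m. window_density (occurrences T z (i + L)) m n \<le> c" by blast
  qed
  then show ?thesis by blast
qed

lemma omega_upper_density_T_eq: "omega_xi k upper_density T = omega_xi k upper_density y"
proof -
  have "upper_density (occurrences T z M) > 0 \<longleftrightarrow> upper_density (occurrences y z M) > 0" for z M
  proof -
    interpret T_occurrences k L A1 C y z M by unfold_locales
    show ?thesis by (rule upper_density_occ_T_pos_iff)
  qed
  then show ?thesis
    by (simp add: omega_xi_eq_occurrences[OF T_in_Sigma mono_upper_density]
        omega_xi_eq_occurrences[OF y_in_Sigma mono_upper_density])
qed

lemma omega_lower_density_T_eq: "omega_xi k lower_density T = omega_xi k lower_density y"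
proof -
  have "lower_density (occurrences T z M) > 0 \<longleftrightarrow> lower_density (occurrences y z M) > 0" for z M
  proof -
    interpret T_occurrences k L A1 C y z M by unfold_locales
    show ?thesis by (rule lower_density_occ_T_pos_iff)
  qed
  then show ?thesis
    by (simp add: omega_xi_eq_occurrences[OF T_in_Sigma mono_lower_density]
        omega_xi_eq_occurrences[OF y_in_Sigma mono_lower_density])
qed

lemma omega_banach_upper_T_eq: "omega_xi k banach_upper T = omega_xi k banach_upper y"
proof -
  have "omega_xi k banach_upper T = PiL k L"
    using k_ge_2 L_ge_3 banach_upper_occurrences_T_not_pos
    by (intro omega_banach_upper_eq_PiL[OF T_in_Sigma _ _ T_PiL_universal]) auto
  moreover have "omega_xi k banach_upper y = PiL k L"
    using k_ge_2 L_ge_3 banach_upper_occurrences_PiL_not_pos[OF y_in_PiL]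
    by (intro omega_banach_upper_eq_PiL[OF y_in_Sigma _ _ Trans_PiL_universal[OF y_Trans]]) auto
  ultimately show ?thesis by simp
qed

lemma omega_banach_lower_T_eq: "omega_xi k banach_lower T = omega_xi k banach_lower y"
  using omega_banach_lower_empty[OF T_in_Sigma k_ge_2 L_ge_3 T_PiL_universal]
    omega_banach_lower_empty[OF y_in_Sigma k_ge_2 L_ge_3 Trans_PiL_universal[OF y_Trans]]
  by simp

end

theorem lemma5p3:
  fixes k L :: nat and A1 :: "nat list" and C :: "nat \<Rightarrow> nat list" and y :: "nat \<Rightarrow> nat"
  assumes "k \<ge> 2" and "L \<ge> 3"
    and "bij_betw C {1..} {w. contained (PiL k L) w}"
    and "set A1 \<subseteq> {..<k}" and "\<not> contained (PiL k L) A1"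
    and "(\<lambda>m. real (length (C (Suc m))) / real (length (Aw A1 C y m))) \<longlonglongrightarrow> 0"
    and "y \<in> Trans k L"
  shows "(\<forall>xi \<in> {upper_density, lower_density, banach_upper, banach_lower}.
            omega_xi k xi (Tmap A1 C y) = omega_xi k xi y)
         \<and> omega_shift k y \<subset> omega_shift k (Tmap A1 C y)"
proof -
  interpret T_construction k L A1 C y
    using assms by unfold_locales
  show ?thesis
    using omega_upper_density_T_eq omega_lower_density_T_eq omega_banach_upper_T_eq
      omega_banach_lower_T_eq omega_shift_y_psubset_T
    unfolding T_def by blast
qed

end
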